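(* (1) Let $S$ be a simple random walk and $\overline S=T(S)$. Then (i) for all $n\ge0$, $\sigma(\overline S_j,j\le n)\vee\sigma(S_1)=\sigma(S_j,j\le n+1)$; (ii) $S_1$ is independent of $\sigma(\overline S)$. (2) Let $\overline S=(\overline S_k)_{k\ge0}$ be a simple random walk. Then (i) (on a possibly enlarged probability space) there exists a simple random walk $S$ with $T(S)=\overline S$, and consequently, with $\overline Y_n:=\max_{k\le n}\overline S_k-\overline S_n$, one has $|\overline Y_n-|S_n||\le 2$ for all $n\in\mathbb N$; (ii) the set of simple random walks $S'$ with $T(S')=\overline S$ consists (almost surely) of exactly the two elements $S$ and $-S$, where $S$ is determined by $\overline S$ together with the additional independent sign $S_1$.
   Context: A simple random walk (SRW) $S=(S_n)_{n\ge0}$ has $S_0=0$ and i.i.d. steps $X_i=S_i-S_{i-1}$ uniform on $\{-1,1\}$. The Csaki–Vincze transformation $T$: given $S$, define $\tau_0=0$, $\tau_1=\min\{i>0:S_{i-1}S_{i+1}<0\}$, $\tau_{l+1}=\min\{i>\tau_l:S_{i-1}S_{i+1}<0\}$ for $l\ge1$; for $j\ge1$ set $\overline X_j=\sum_{l\ge0}(-1)^{l+1}X_1X_{j+1}1_{\{\tau_l+1\le j\le\tau_{l+1}\}}$, and $\overline S_0=0$, $\overline S_j=\overline X_1+\dots+\overline X_j$. Then $T(S):=\overline S$. It is known (Csaki–Vincze) that $\overline S=T(S)$ is a SRW satisfying $|\max_{k\le n}\overline S_k-\overline S_n-|S_n||\le2$ for all $n$, and that $\tau_l=\min\{n\ge0:\overline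 S_n=2l\}$ for all $l\ge1$. *)

theory Defs
  imports "HOL-Probability.Probability"
begin

definition step :: "(nat \<Rightarrow> int) \<Rightarrow> nat \<Rightarrow> int" where
  "step s i = s i - s (i - 1)"

fun cv_tau :: "(nat \<Rightarrow> int) \<Rightarrow> nat \<Rightarrow> enat" where
  "cv_tau s 0 = 0"
| "cv_tau s (Suc l) =
     (if \<exists>i. enat i > cv_tau s l \<and> s (i - 1) * s (i + 1) < 0
      then enat (LEAST i. enat i > cv_tau s l \<and> s (i - 1) * s (i + 1) < 0)
      else \<infinity>)"

text \<open>Xbar_j = sum over l >= 0 of (-1)^(l+1) X_1 X_(j+1) 1{tau_l + 1 <= j <= tau_(l+1)}.
  Since tau_l >= l, only l <= j can contribute, so the sum is written over {..j}.\<close>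
definition cv_Xbar :: "(nat \<Rightarrow> int) \<Rightarrow> nat \<Rightarrow> int" where
  "cv_Xbar s j = (\<Sum>l\<in>{..j}. (-1) ^ (l + 1) * step s 1 * step s (j + 1) *
       (if cv_tau s l + 1 \<le> enat j \<and> enat j \<le> cv_tau s (Suc l) then 1 else 0))"

definition cv_T :: "(nat \<Rightarrow> int) \<Rightarrow> nat \<Rightarrow> int" where
  "cv_T s j = (\<Sum>i\<in>{1..j}. cv_Xbar s i)"

definition srw :: "'a measure \<Rightarrow> ('a \<Rightarrow> nat \<Rightarrow> int) \<Rightarrow> bool" where
  "srw M S \<longleftrightarrow> prob_space M \<and>
     (\<forall>\<omega>\<in>space M. S \<omega> 0 = 0) \<and>
     (\<forall>\<omega>\<in>space M. \<forall>i. S \<omega> (Suc i) - S \<omega> i \<in> {-1, 1}) \<and>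
     (\<forall>i. (\<lambda>\<omega>. S \<omega> (Suc i) - S \<omega> i) \<in> measurable M (count_space UNIV)) \<and>
     prob_space.indep_vars M (\<lambda>_. count_space UNIV) (\<lambda>i \<omega>. S \<omega> (Suc i) - S \<omega> i) UNIV \<and>
     (\<forall>i. distr M (count_space UNIV) (\<lambda>\<omega>. S \<omega> (Suc i) - S \<omega> i)
            = measure_pmf (pmf_of_set {-1, 1}))"

definition gen_sigma :: "'a set \<Rightarrow> ('i \<Rightarrow> 'a \<Rightarrow> int) \<Rightarrow> 'i set \<Rightarrow> 'a set set" where
  "gen_sigma \<Omega> X I = sigma_sets \<Omega> (\<Union>i\<in>I. {X i -` A \<inter> \<Omega> | A. True})"

definition run_max_gap :: "(nat \<Rightarrow> int) \<Rightarrow> nat \<Rightarrow> int" where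
  "run_max_gap s n = Max (s ` {..n}) - s n"

end

theory Submission
  imports Defs
begin

text \<open>Along a path \<open>s\<close> of a simple random walk the increment of \<open>T(s)\<close> at time \<open>j\<close> is
  \<open>|s\<^sub>j| - |s\<^sub>j\<^sub>+\<^sub>1|\<close>, plus \<open>2\<close> when \<open>s\<close> crosses zero at \<open>j\<close>. Hence \<open>T(s)\<^sub>n = 1 - |s\<^sub>n\<^sub>+\<^sub>1| + 2 K\<close>,
  where \<open>K\<close> counts the zero crossings before \<open>n + 1\<close>, and the running maximum of \<open>T(s)\<close>
  is \<open>2 K\<close> or \<open>2 K + 1\<close>; this is the bound \<open>|max T(s) - T(s)\<^sub>n - |s\<^sub>n|| \<le> 2\<close>. The sign of each
  step of \<open>T(s)\<close> only depends on \<open>s\<^sub>1\<close> and the earlier crossings, so \<open>s\<close> is recovered step by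
  step from \<open>T(s)\<close> and \<open>s\<^sub>1\<close>, and \<open>T(-s) = T(s)\<close>. This gives the identity of \<open>\<sigma>\<close>-algebras
  and shows that \<open>T\<close> is two-to-one. An event of \<open>T(S)\<close> is invariant under \<open>S \<mapsto> -S\<close>,
  which preserves the law of \<open>S\<close> and flips \<open>S\<^sub>1\<close>; hence \<open>S\<^sub>1\<close> is independent of \<open>T(S)\<close>.
  Conversely, a walk \<open>Sbar\<close> together with an independent fair sign \<open>e\<close> is mapped by the
  inverse to a walk \<open>S\<close> with \<open>T(S) = Sbar\<close>: its first \<open>n\<close> steps equal a given sign pattern
  \<open>w\<close> iff \<open>e = w\<^sub>0\<close> and the first \<open>n - 1\<close> steps of \<open>Sbar\<close> are those of \<open>T\<close> applied to
  the path with steps \<open>w\<close>, an event of probability \<open>2\<^sup>-\<^sup>n\<close>.\<close>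

section \<open>Zero crossings and the transformation\<close>

definition simple_path :: "(nat \<Rightarrow> int) \<Rightarrow> bool" where
  "simple_path s \<longleftrightarrow> s 0 = 0 \<and> (\<forall>i. s (Suc i) - s i \<in> {-1, 1})"

lemma simple_path_first: "simple_path s \<Longrightarrow> s 1 \<in> {-1, 1}"
  unfolding simple_path_def by (metis One_nat_def diff_zero)

lemma simple_path_uminus: "simple_path s \<Longrightarrow> simple_path (\<lambda>i. - s i)"
  unfolding simple_path_def by (auto simp: algebra_simps) (metis insert_iff minus_diff_eq singletonD)+

lemma neg_one_power_pm_one: "(-1::int) ^ n \<in> {-1, 1}"
  by (induction n) auto

lemma pm_one_mult: "(x::int) \<in> {-1, 1} \<Longrightarrow> y \<in> {-1, 1} \<Longrightarrow> x * y \<in> {-1, 1}"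
  by auto

text \<open>\<open>crossings s j\<close> counts the times \<open>0 < i < j\<close> with \<open>s (i - 1) * s (i + 1) < 0\<close>, i.e.
  the \<open>\<tau>\<^sub>l\<close> that are smaller than \<open>j\<close>.\<close>
fun crossings :: "(nat \<Rightarrow> int) \<Rightarrow> nat \<Rightarrow> nat" where
  "crossings s 0 = 0"
| "crossings s (Suc j) = crossings s j + (if 0 < j \<and> s (j - 1) * s (j + 1) < 0 then 1 else 0)"

lemma crossings_le: "crossings s j \<le> j"
  by (induction j) auto

lemma crossings_mono: "i \<le> j \<Longrightarrow> crossings s i \<le> crossings s j"
  by (induction j) (auto simp: le_Suc_eq)

lemma crossings_cong: "(\<And>i. i \<le> j \<Longrightarrow> s i = s' i) \<Longrightarrow> crossings s j = crossings s' j"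
  by (induction j) auto

lemma crossings_uminus: "crossings (\<lambda>i. - s i) j = crossings s j"
  by (induction j) auto

lemma Suc_le_crossings_iff:
  "Suc l \<le> crossings s j \<longleftrightarrow> (\<exists>i<j. 0 < i \<and> l \<le> crossings s i \<and> s (i - 1) * s (i + 1) < 0)"
proof (induction j)
  case (Suc j)
  have "(\<exists>i<Suc j. 0 < i \<and> l \<le> crossings s i \<and> s (i - 1) * s (i + 1) < 0) \<longleftrightarrow>
        (\<exists>i<j. 0 < i \<and> l \<le> crossings s i \<and> s (i - 1) * s (i + 1) < 0) \<or>
        (0 < j \<and> l \<le> crossings s j \<and> s (j - 1) * s (j + 1) < 0)"
    by (auto simp: less_Suc_eq)
  with Suc show ?case by auto
qed simp

lemma cv_tau_less_enat_iff: "cv_tau s l < enat j \<longleftrightarrow> 0 < j \<and> l \<le> crossings s j"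
proof (induction l arbitrary: j)
  case 0
  then show ?case by (simp add: zero_enat_def)
next
  case (Suc l)
  let ?P = "\<lambda>i. cv_tau s l < enat i \<and> s (i - 1) * s (i + 1) < 0"
  have "cv_tau s (Suc l) < enat j \<longleftrightarrow> (\<exists>i<j. ?P i)"
  proof (cases "\<exists>i. ?P i")
    case True
    then have least: "?P (LEAST i. ?P i)" by (rule LeastI_ex)
    have "(LEAST i. ?P i) < j \<longleftrightarrow> (\<exists>i<j. ?P i)"
      using least by (auto intro: Least_le le_less_trans)
    with True show ?thesis by simp
  next
    case False
    then have "cv_tau s (Suc l) = \<infinity>" by simp
    with False show ?thesis by simp
  qed
  also have "\<dots> \<longleftrightarrow> (\<exists>i<j. 0 < i \<and> l \<le> crossings s i \<and> s (i - 1) * s (i + 1) < 0)"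
    using Suc by auto
  also have "\<dots> \<longleftrightarrow> 0 < j \<and> Suc l \<le> crossings s j"
    using Suc_le_crossings_iff[of l s j] by auto
  finally show ?case .
qed

text \<open>For \<open>j > 0\<close> exactly one indicator in the sum defining \<open>cv_Xbar s j\<close> is nonzero, namely
  the one for \<open>l = crossings s j\<close>.\<close>
definition cv_incr :: "(nat \<Rightarrow> int) \<Rightarrow> nat \<Rightarrow> int" where
  "cv_incr s j = (-1) ^ (crossings s j + 1) * step s 1 * step s (j + 1)"

lemma cv_Xbar_eq_cv_incr:
  assumes "0 < j"
  shows "cv_Xbar s j = cv_incr s j"
proof -
  have one_le_iff: "a + 1 \<le> enat j \<longleftrightarrow> a < enat j" for a
    by (cases a) (auto simp: one_enat_def)
  have indicator: "(cv_tau s l + 1 \<le> enat j \<and> enat j \<le> cv_tau s (Suc l)) \<longleftrightarrow> l = crossings s j" for l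
  proof -
    have "cv_tau s l + 1 \<le> enat j \<longleftrightarrow> l \<le> crossings s j"
      using cv_tau_less_enat_iff[of s l j] assms by (simp add: one_le_iff)
    moreover have "enat j \<le> cv_tau s (Suc l) \<longleftrightarrow> \<not> Suc l \<le> crossings s j"
      using cv_tau_less_enat_iff[of s "Suc l" j] assms not_less[of "cv_tau s (Suc l)" "enat j"]
      by simp
    ultimately show ?thesis by auto
  qed
  have "cv_Xbar s j =
      (\<Sum>l\<in>{..j}. if l = crossings s j then (-1) ^ (l + 1) * step s 1 * step s (j + 1) else 0)"
    unfolding cv_Xbar_def by (intro sum.cong refl) (simp only: indicator, auto)
  also have "\<dots> = cv_incr s j"
    using crossings_le[of s j] by (simp add: cv_incr_def)
  finally show ?thesis .
qed

lemma cv_T_eq_sum_cv_incr: "cv_T s n = (\<Sum>i\<in>{1..n}. cv_incr s i)"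
  unfolding cv_T_def by (intro sum.cong refl) (simp add: cv_Xbar_eq_cv_incr)

lemma cv_T_0 [simp]: "cv_T s 0 = 0"
  by (simp add: cv_T_def)

lemma cv_T_Suc: "cv_T s (Suc n) = cv_T s n + cv_incr s (Suc n)"
  unfolding cv_T_eq_sum_cv_incr by (simp add: add.commute)

lemma cv_incr_cong: "(\<And>i. i \<le> Suc j \<Longrightarrow> s i = s' i) \<Longrightarrow> cv_incr s j = cv_incr s' j"
  unfolding cv_incr_def step_def using crossings_cong[of j s s'] by simp

lemma cv_T_cong: "(\<And>i. i \<le> Suc n \<Longrightarrow> s i = s' i) \<Longrightarrow> cv_T s n = cv_T s' n"
  unfolding cv_T_eq_sum_cv_incr by (intro sum.cong refl cv_incr_cong) auto

lemma cv_T_uminus: "cv_T (\<lambda>i. - s i) = cv_T s"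
  by (rule ext) (simp add: cv_T_eq_sum_cv_incr cv_incr_def step_def crossings_uminus algebra_simps)

text \<open>One step \<open>a, b, c\<close> of a simple path, with \<open>\<sigma>\<close> the side of zero the path is on at \<open>b\<close>
  (the side it came from if \<open>b = 0\<close>); the side changes exactly when \<open>a * c < 0\<close>.\<close>
lemma unit_steps_side:
  fixes a b c \<sigma> :: int
  assumes "\<sigma> \<in> {-1, 1}" "b - a \<in> {-1, 1}" "c - b \<in> {-1, 1}" "b * \<sigma> \<ge> 0" "b = 0 \<longrightarrow> a * \<sigma> > 0"
  defines "\<sigma>' \<equiv> if a * c < 0 then - \<sigma> else \<sigma>"
  shows "c * \<sigma>' \<ge> 0" "c = 0 \<longrightarrow> b * \<sigma>' > 0"
    and "- \<sigma> * (c - b) = \<bar>b\<bar> - \<bar>c\<bar> + 2 * (if a * c < 0 then 1 else 0)"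
proof -
  consider "b > 0" | "b < 0" | "b = 0" by linarith
  then have "c * \<sigma>' \<ge> 0 \<and> (c = 0 \<longrightarrow> b * \<sigma>' > 0) \<and>
      - \<sigma> * (c - b) = \<bar>b\<bar> - \<bar>c\<bar> + 2 * (if a * c < 0 then 1 else 0)"
  proof cases
    case 1
    then have "a \<ge> 0" "c \<ge> 0" using assms(2,3) by auto
    then have "a * c \<ge> 0" by simp
    with 1 assms show ?thesis by auto
  next
    case 2
    then have "a \<le> 0" "c \<le> 0" using assms(2,3) by auto
    then have "a * c \<ge> 0" by (simp add: zero_le_mult_iff)
    with 2 assms show ?thesis by auto
  next
    case 3
    then have "a \<in> {-1, 1}" "c \<in> {-1, 1}" using assms(2,3) by auto
    with 3 assms show ?thesis by auto
  qed
  then show "c * \<sigma>' \<ge> 0" "c = 0 \<longrightarrow> b * \<sigma>' > 0"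
    and "- \<sigma> * (c - b) = \<bar>b\<bar> - \<bar>c\<bar> + 2 * (if a * c < 0 then 1 else 0)"
    by auto
qed

lemma crossings_side:
  assumes "simple_path s"
  shows "s (Suc j) * ((-1) ^ crossings s (Suc j) * s 1) \<ge> 0 \<and>
         (s (Suc j) = 0 \<longrightarrow> s j * ((-1) ^ crossings s (Suc j) * s 1) > 0)"
proof (induction j)
  case 0
  show ?case using simple_path_first[OF assms] assms by (auto simp: simple_path_def)
next
  case (Suc j)
  let ?\<sigma> = "(-1) ^ crossings s (Suc j) * s 1"
  have "?\<sigma> \<in> {-1, 1}" using pm_one_mult[OF neg_one_power_pm_one simple_path_first[OF assms]] .
  moreover have "s (Suc j) - s j \<in> {-1, 1}" "s (Suc (Suc j)) - s (Suc j) \<in> {-1, 1}"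
    using assms by (auto simp: simple_path_def)
  moreover have "(-1) ^ crossings s (Suc (Suc j)) * s 1 = (if s j * s (Suc (Suc j)) < 0 then - ?\<sigma> else ?\<sigma>)"
    by auto
  ultimately show ?case using unit_steps_side(1,2) Suc by simp
qed

lemma cv_incr_eq_abs:
  assumes "simple_path s"
  shows "cv_incr s (Suc j) =
    \<bar>s (Suc j)\<bar> - \<bar>s (Suc (Suc j))\<bar> + 2 * (if s j * s (Suc (Suc j)) < 0 then 1 else 0)"
proof -
  let ?\<sigma> = "(-1) ^ crossings s (Suc j) * s 1"
  have "?\<sigma> \<in> {-1, 1}" using pm_one_mult[OF neg_one_power_pm_one simple_path_first[OF assms]] .
  moreover have "s (Suc j) - s j \<in> {-1, 1}" "s (Suc (Suc j)) - s (Suc j) \<in> {-1, 1}"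
    using assms by (auto simp: simple_path_def)
  moreover have "cv_incr s (Suc j) = - ?\<sigma> * (s (Suc (Suc j)) - s (Suc j))"
    using assms by (simp add: cv_incr_def step_def simple_path_def)
  ultimately show ?thesis using unit_steps_side(3) crossings_side[OF assms, of j] by simp
qed

theorem cv_T_eq_crossings:
  assumes "simple_path s"
  shows "cv_T s n = 1 - \<bar>s (Suc n)\<bar> + 2 * int (crossings s (Suc n))"
proof (induction n)
  case 0
  show ?case using simple_path_first[OF assms] by auto
next
  case (Suc n)
  show ?case unfolding cv_T_Suc Suc cv_incr_eq_abs[OF assms] by simp
qed

lemma crossing_at_zero:
  assumes "simple_path s" "s j * s (Suc (Suc j)) < 0"
  shows "s (Suc j) = 0" "\<bar>s (Suc (Suc j))\<bar> = 1"
proof -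
  have "s (Suc j) - s j \<in> {-1, 1}" "s (Suc (Suc j)) - s (Suc j) \<in> {-1, 1}"
    using assms by (auto simp: simple_path_def)
  moreover have "\<not> (s j \<ge> 0 \<and> s (Suc (Suc j)) \<ge> 0)" "\<not> (s j \<le> 0 \<and> s (Suc (Suc j)) \<le> 0)"
    using assms(2) by (metis mult_nonneg_nonneg not_less, metis mult_nonpos_nonpos not_less)
  ultimately show "s (Suc j) = 0" "\<bar>s (Suc (Suc j))\<bar> = 1" by auto
qed

lemma cv_T_attains_twice_crossings:
  assumes "simple_path s"
  shows "\<exists>i\<le>n. cv_T s i = 2 * int (crossings s (Suc n))"
proof (induction n)
  case (Suc n)
  show ?case
  proof (cases "s n * s (Suc (Suc n)) < 0")
    case True
    then have "cv_T s (Suc n) = 2 * int (crossings s (Suc (Suc n)))"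
      unfolding cv_T_eq_crossings[OF assms] using crossing_at_zero[OF assms True] by simp
    then show ?thesis by blast
  next
    case False
    then have "crossings s (Suc (Suc n)) = crossings s (Suc n)" by simp
    with Suc show ?thesis by (metis le_Suc_eq)
  qed
qed simp

theorem run_max_gap_cv_T:
  assumes "simple_path s"
  shows "\<bar>run_max_gap (cv_T s) n - \<bar>s n\<bar>\<bar> \<le> 2"
proof -
  let ?K = "int (crossings s (Suc n))" and ?M = "Max (cv_T s ` {..n})"
  have "cv_T s k \<le> 1 + 2 * ?K" if "k \<le> n" for k
    using crossings_mono[of "Suc k" "Suc n" s] that unfolding cv_T_eq_crossings[OF assms] by simp
  moreover have "?M \<in> cv_T s ` {..n}" by (intro Max_in) auto
  ultimately have upper: "?M \<le> 1 + 2 * ?K" by auto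
  obtain i where "i \<le> n" "cv_T s i = 2 * ?K"
    using cv_T_attains_twice_crossings[OF assms] by blast
  moreover have "cv_T s i \<le> ?M" using \<open>i \<le> n\<close> by (intro Max_ge) auto
  ultimately have lower: "2 * ?K \<le> ?M" by linarith
  have "s (Suc n) - s n \<in> {-1, 1}" using assms by (auto simp: simple_path_def)
  then have "\<bar>\<bar>s (Suc n)\<bar> - \<bar>s n\<bar>\<bar> \<le> 1" by auto
  then show ?thesis
    unfolding run_max_gap_def using upper lower cv_T_eq_crossings[OF assms, of n] by linarith
qed

section \<open>Inverting the transformation\<close>

lemma cv_T_determines_prefix:
  assumes "s 0 = 0" "s' 0 = 0" "s 1 = s' 1" "s 1 \<noteq> 0" "\<And>j. j \<le> n \<Longrightarrow> cv_T s j = cv_T s' j"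
  shows "j \<le> Suc n \<Longrightarrow> s j = s' j"
  using assms(5)
proof (induction n arbitrary: j)
  case 0
  with assms show ?case by (auto simp: le_Suc_eq)
next
  case (Suc n)
  then have prefix: "s j = s' j" if "j \<le> Suc n" for j
    using that by auto
  have "cv_incr s (Suc n) = cv_incr s' (Suc n)"
    using Suc.prems(2)[of n] Suc.prems(2)[of "Suc n"] cv_T_Suc[of s n] cv_T_Suc[of s' n] by simp
  moreover have "crossings s (Suc n) = crossings s' (Suc n)"
    using prefix by (intro crossings_cong) auto
  ultimately have "s (Suc (Suc n)) = s' (Suc (Suc n))"
    using prefix assms(1-4) unfolding cv_incr_def step_def by simp
  with prefix Suc.prems(1) show ?case by (auto simp: le_Suc_eq)
qed

lemma cv_T_inj:
  assumes "s 0 = 0" "s' 0 = 0" "s 1 = s' 1" "s 1 \<noteq> 0" "cv_T s = cv_T s'"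
  shows "s = s'"
proof
  show "s j = s' j" for j
    using cv_T_determines_prefix[OF assms(1-4), of j j] assms(5) by simp
qed

theorem cv_T_eq_cases:
  assumes "simple_path s" "simple_path s'" "cv_T s' = cv_T s"
  shows "s' = s \<or> s' = (\<lambda>n. - s n)"
proof -
  have first: "s 1 \<in> {-1, 1}" "s' 1 \<in> {-1, 1}"
    using simple_path_first assms by auto
  have zero: "s 0 = 0" "s' 0 = 0"
    using assms unfolding simple_path_def by auto
  show ?thesis
  proof (cases "s' 1 = s 1")
    case True
    with first have "s' 1 \<noteq> 0" by auto
    with cv_T_inj[OF zero(2,1) True] assms(3) show ?thesis by blast
  next
    case False
    with first have "(\<lambda>n. - s' n) 1 = s 1" "(\<lambda>n. - s' n) 1 \<noteq> 0" by auto
    moreover have "cv_T (\<lambda>n. - s' n) = cv_T s" using assms(3) cv_T_uminus by simp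
    ultimately have "(\<lambda>n. - s' n) = s" using cv_T_inj[of "\<lambda>n. - s' n" s] zero by simp
    then show ?thesis by auto
  qed
qed

text \<open>The inverse of \<open>T\<close>: given \<open>b = T(s)\<close> and \<open>e = s\<^sub>1\<close>, the state after \<open>j\<close> steps is
  \<open>(s\<^sub>j, s\<^sub>j\<^sub>+\<^sub>1, crossings s (j + 1))\<close>, and \<open>s\<^sub>j\<^sub>+\<^sub>2\<close> is obtained by solving
  \<open>cv_incr s (j + 1) = b\<^sub>j\<^sub>+\<^sub>1 - b\<^sub>j\<close> for it.\<close>
fun cv_inv_state :: "(nat \<Rightarrow> int) \<Rightarrow> int \<Rightarrow> nat \<Rightarrow> int \<times> int \<times> nat" where
  "cv_inv_state b e 0 = (0, e, 0)"
| "cv_inv_state b e (Suc j) = (case cv_inv_state b e j of (a, x, c) \<Rightarrow>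
     (let y = x + (-1) ^ (c + 1) * e * (b (Suc j) - b j) in
      (x, y, c + (if a * y < 0 then 1 else 0))))"

definition cv_inv :: "(nat \<Rightarrow> int) \<Rightarrow> int \<Rightarrow> nat \<Rightarrow> int" where
  "cv_inv b e i = fst (cv_inv_state b e i)"

lemma cv_inv_state_next: "fst (snd (cv_inv_state b e j)) = cv_inv b e (Suc j)"
  by (cases "cv_inv_state b e j") (simp add: cv_inv_def Let_def)

lemma cv_inv_state_crossings: "snd (snd (cv_inv_state b e j)) = crossings (cv_inv b e) (Suc j)"
proof (induction j)
  case (Suc j)
  obtain a x c where state: "cv_inv_state b e j = (a, x, c)" by (metis prod_cases3)
  have "a = cv_inv b e j" using state by (simp add: cv_inv_def)
  moreover have "x = cv_inv b e (Suc j)" using state cv_inv_state_next[of b e j] by simp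
  moreover have "cv_inv b e (Suc (Suc j)) = x + (-1) ^ (c + 1) * e * (b (Suc j) - b j)"
    using cv_inv_state_next[of b e "Suc j"] state by (simp add: Let_def)
  ultimately show ?case using state Suc by (simp add: Let_def)
qed (simp add: cv_inv_def)

lemma cv_inv_0 [simp]: "cv_inv b e 0 = 0"
  by (simp add: cv_inv_def)

lemma cv_inv_1 [simp]: "cv_inv b e (Suc 0) = e"
  by (simp add: cv_inv_def)

lemma cv_inv_Suc_Suc:
  "cv_inv b e (Suc (Suc j)) =
     cv_inv b e (Suc j) + (-1) ^ (crossings (cv_inv b e) (Suc j) + 1) * e * (b (Suc j) - b j)"
proof -
  obtain a x c where state: "cv_inv_state b e j = (a, x, c)" by (metis prod_cases3)
  moreover have "x = cv_inv b e (Suc j)" using state cv_inv_state_next[of b e j] by simp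
  moreover have "c = crossings (cv_inv b e) (Suc j)" using state cv_inv_state_crossings[of b e j] by simp
  ultimately show ?thesis using cv_inv_state_next[of b e "Suc j"] by (simp add: Let_def)
qed

lemma cv_inv_cong: "(\<And>i. i < j \<Longrightarrow> b i = b' i) \<Longrightarrow> cv_inv b e j = cv_inv b' e j"
proof (cases j)
  case (Suc k)
  assume "\<And>i. i < j \<Longrightarrow> b i = b' i"
  then have "\<forall>i\<le>k. b i = b' i" using Suc by auto
  then have "cv_inv_state b e k = cv_inv_state b' e k"
    by (induction k) (auto simp: Let_def)
  then show ?thesis using cv_inv_state_next[of b e k] cv_inv_state_next[of b' e k] Suc by simp
qed simp

lemma cv_incr_cv_inv:
  assumes "e \<in> {-1, 1}"
  shows "cv_incr (cv_inv b e) (Suc j) = b (Suc j) - b j"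
proof -
  define q where "q = (-1::int) ^ (crossings (cv_inv b e) (Suc j) + 1)"
  have "q * q = 1" unfolding q_def by (simp flip: power_add)
  moreover have "e * e = 1" using assms by auto
  moreover have "cv_incr (cv_inv b e) (Suc j) = (q * q) * (e * e) * (b (Suc j) - b j)"
    unfolding cv_incr_def step_def q_def by (simp del: crossings.simps add: cv_inv_Suc_Suc algebra_simps)
  ultimately show ?thesis by simp
qed

theorem cv_T_cv_inv:
  assumes "e \<in> {-1, 1}" "b 0 = 0"
  shows "cv_T (cv_inv b e) = b"
proof
  show "cv_T (cv_inv b e) n = b n" for n
    by (induction n) (simp_all add: assms(2) cv_T_Suc cv_incr_cv_inv[OF assms(1)])
qed

lemma simple_path_cv_inv:
  assumes "e \<in> {-1, 1}" "simple_path b"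
  shows "simple_path (cv_inv b e)"
  unfolding simple_path_def
proof (intro conjI allI)
  show "cv_inv b e (Suc i) - cv_inv b e i \<in> {-1, 1}" for i
  proof (cases i)
    case (Suc j)
    have "b (Suc j) - b j \<in> {-1, 1}" using assms by (simp add: simple_path_def)
    then have "(-1) ^ (crossings (cv_inv b e) (Suc j) + 1) * e * (b (Suc j) - b j) \<in> {-1, 1}"
      using pm_one_mult[OF pm_one_mult[OF neg_one_power_pm_one assms(1)]] by blast
    then show ?thesis unfolding Suc cv_inv_Suc_Suc by (simp del: crossings.simps)
  qed (use assms in simp)
qed simp

lemma cv_inv_cv_T:
  assumes "simple_path s"
  shows "cv_inv (cv_T s) (s 1) = s"
proof (rule cv_T_inj)
  show "cv_T (cv_inv (cv_T s) (s 1)) = cv_T s"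
    using simple_path_first[OF assms] by (simp add: cv_T_cv_inv)
  show "cv_inv (cv_T s) (s 1) 1 \<noteq> 0"
    using simple_path_first[OF assms] by auto
qed (use assms in \<open>auto simp: simple_path_def\<close>)

definition walk :: "(nat \<Rightarrow> int) \<Rightarrow> nat \<Rightarrow> int" where
  "walk w i = (\<Sum>k<i. w k)"

lemma walk_0 [simp]: "walk w 0 = 0"
  by (simp add: walk_def)

lemma walk_Suc: "walk w (Suc i) = walk w i + w i"
  by (simp add: walk_def)

lemma walk_uminus: "walk (\<lambda>i. - w i) = (\<lambda>j. - walk w j)"
  by (rule ext) (simp add: walk_def sum_negf)

lemma walk_cong: "(\<And>k. k < j \<Longrightarrow> w k = w' k) \<Longrightarrow> walk w j = walk w' j"
  unfolding walk_def by (rule sum.cong) auto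

lemma walk_increments: "s 0 = 0 \<Longrightarrow> walk (\<lambda>i. s (Suc i) - s i) = s"
proof
  show "s 0 = 0 \<Longrightarrow> walk (\<lambda>i. s (Suc i) - s i) j = s j" for j
    by (induction j) (simp_all add: walk_Suc)
qed

lemma increments_eq_iff:
  fixes s t :: "nat \<Rightarrow> 'a :: ab_group_add"
  assumes "s 0 = t 0"
  shows "(\<forall>i<n. s (Suc i) - s i = t (Suc i) - t i) \<longleftrightarrow> (\<forall>j\<le>n. s j = t j)"
proof (intro iffI allI impI)
  fix j assume incr: "\<forall>i<n. s (Suc i) - s i = t (Suc i) - t i"
  show "j \<le> n \<Longrightarrow> s j = t j"
  proof (induction j)
    case (Suc j)
    then have "s j = t j" by simp
    moreover have "s (Suc j) - s j = t (Suc j) - t j" using incr Suc.prems by (simp add: Suc_le_eq)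
    ultimately show ?case by (metis diff_add_cancel)
  qed (use assms in simp)
qed auto

lemma cv_incr_pm_one:
  assumes "step s 1 \<in> {-1, 1}" "step s (Suc j) \<in> {-1, 1}"
  shows "cv_incr s j \<in> {-1, 1}"
  using pm_one_mult[OF pm_one_mult[OF neg_one_power_pm_one[of "crossings s j + 1"] assms(1)] assms(2)]
  by (simp add: cv_incr_def)

lemma cv_inv_prefix_eq_iff:
  assumes "b 0 = 0" "e \<in> {-1, 1}" "t 0 = 0"
  shows "(\<forall>j\<le>Suc m. cv_inv b e j = t j) \<longleftrightarrow> e = t 1 \<and> (\<forall>j\<le>m. b j = cv_T t j)"
proof
  assume prefix: "\<forall>j\<le>Suc m. cv_inv b e j = t j"
  have "b j = cv_T t j" if "j \<le> m" for j
    using cv_T_cv_inv[of e b, OF assms(2,1)] cv_T_cong[of j "cv_inv b e" t] prefix that by simp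
  with prefix show "e = t 1 \<and> (\<forall>j\<le>m. b j = cv_T t j)" by auto
next
  assume "e = t 1 \<and> (\<forall>j\<le>m. b j = cv_T t j)"
  then show "\<forall>j\<le>Suc m. cv_inv b e j = t j"
    using cv_T_determines_prefix[of "cv_inv b e" t m] cv_T_cv_inv[of e b, OF assms(2,1)] assms by auto
qed

lemma cv_inv_steps_iff:
  assumes "b 0 = 0" "e \<in> {-1, 1}"
  shows "(\<forall>i<Suc m. cv_inv b e (Suc i) - cv_inv b e i = w i) \<longleftrightarrow>
    e = w 0 \<and>
    (\<forall>k<m. b (Suc k) - b k = cv_T (walk w) (Suc k) - cv_T (walk w) k)"
proof -
  have "(\<forall>i<Suc m. cv_inv b e (Suc i) - cv_inv b e i = w i) \<longleftrightarrow>
      (\<forall>j\<le>Suc m. cv_inv b e j = walk w j)"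
    using increments_eq_iff[of "cv_inv b e" "walk w" "Suc m"] by (simp add: walk_Suc)
  also have "\<dots> \<longleftrightarrow> e = w 0 \<and> (\<forall>j\<le>m. b j = cv_T (walk w) j)"
    using cv_inv_prefix_eq_iff[of b e "walk w" m] assms
    by (simp add: walk_def)
  also have "\<dots> \<longleftrightarrow> e = w 0 \<and>
      (\<forall>k<m. b (Suc k) - b k = cv_T (walk w) (Suc k) - cv_T (walk w) k)"
    using increments_eq_iff[of b "cv_T (walk w)" m] assms by simp
  finally show ?thesis .
qed

section \<open>Functions of finitely many integer random variables\<close>

lemma measurable_of_finitely_many:
  fixes Y :: "'i \<Rightarrow> 'a \<Rightarrow> int" and g :: "('i \<Rightarrow> int) \<Rightarrow> 'b"
  assumes J: "finite J" and Y: "\<And>i. i \<in> J \<Longrightarrow> Y i \<in> measurable N (count_space UNIV)"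
    and X: "\<And>\<omega>. \<omega> \<in> space N \<Longrightarrow> X \<omega> = g (\<lambda>i. if i \<in> J then Y i \<omega> else 0)"
  shows "X \<in> measurable N (count_space UNIV)"
proof (rule measurableI)
  fix B :: "'b set"
  define vec where "vec \<omega> = (\<lambda>i. if i \<in> J then Y i \<omega> else 0)" for \<omega>
  define V where "V = (\<lambda>f i. if i \<in> J then f i else (0::int)) ` (PiE J (\<lambda>_. UNIV::int set))"
  have cV: "countable V" unfolding V_def
    by (intro countable_image countable_PiE J) auto
  have vV: "vec \<omega> \<in> V" for \<omega>
    unfolding V_def vec_def
    by (rule image_eqI[where x="restrict (\<lambda>i. Y i \<omega>) J"]) auto
  have eq: "X -` B \<inter> space N = (\<Union>v\<in>V \<inter> g -` B. {\<omega>\<in>space N. \<forall>i\<in>J. Y i \<omega> = v i})"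
  proof (intro equalityI subsetI)
    fix \<omega> assume "\<omega> \<in> X -` B \<inter> space N"
    then show "\<omega> \<in> (\<Union>v\<in>V \<inter> g -` B. {\<omega>\<in>space N. \<forall>i\<in>J. Y i \<omega> = v i})"
      using vV[of \<omega>] X[of \<omega>] by (auto intro!: bexI[where x="vec \<omega>"] simp: vec_def)
  next
    fix \<omega> assume "\<omega> \<in> (\<Union>v\<in>V \<inter> g -` B. {\<omega>\<in>space N. \<forall>i\<in>J. Y i \<omega> = v i})"
    then obtain v where v: "v \<in> V" "g v \<in> B" "\<omega> \<in> space N" "\<forall>i\<in>J. Y i \<omega> = v i" by auto
    have "v = vec \<omega>" using v(1,4) unfolding V_def vec_def by auto
    then show "\<omega> \<in> X -` B \<inter> space N" using v X[of \<omega>] by (simp add: vec_def)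
  qed
  show "X -` B \<inter> space N \<in> sets N" unfolding eq
  proof (rule sets.countable_UN'')
    show "countable (V \<inter> g -` B)" using cV by auto
    fix v
    show "{\<omega>\<in>space N. \<forall>i\<in>J. Y i \<omega> = v i} \<in> sets N"
    proof (rule sets.sets_Collect_finite_All[OF _ J])
      fix i assume "i \<in> J"
      have "{\<omega>\<in>space N. Y i \<omega> = v i} = Y i -` {v i} \<inter> space N" by auto
      then show "{\<omega>\<in>space N. Y i \<omega> = v i} \<in> sets N"
        using measurable_sets[OF Y[OF \<open>i\<in>J\<close>], of "{v i}"] by simp
    qed
  qed
qed simp

lemma vimage_in_gen_sigma:
  fixes Y :: "'i \<Rightarrow> 'a \<Rightarrow> int"
  assumes J: "finite J" "J \<subseteq> I"
    and X: "\<And>\<omega>. \<omega> \<in> \<Omega> \<Longrightarrow> X \<omega> = g (\<lambda>i. if i \<in> J then Y i \<omega> else 0)"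
  shows "X -` A \<inter> \<Omega> \<in> gen_sigma \<Omega> Y I"
proof -
  define G where "G = (\<Union>i\<in>I. {Y i -` A \<inter> \<Omega> | A. True})"
  define N where "N = sigma \<Omega> G"
  have GP: "G \<subseteq> Pow \<Omega>" unfolding G_def by auto
  have sN: "space N = \<Omega>" "sets N = gen_sigma \<Omega> Y I"
    unfolding N_def gen_sigma_def G_def[symmetric] using GP by auto
  have "Y i \<in> measurable N (count_space UNIV)" if "i \<in> I" for i
  proof (rule measurableI)
    fix A :: "int set"
    have "Y i -` A \<inter> \<Omega> \<in> G" unfolding G_def using that by auto
    then show "Y i -` A \<inter> space N \<in> sets N" unfolding sN gen_sigma_def G_def[symmetric] by auto
  qed simp
  then have "X \<in> measurable N (count_space UNIV)"
    using J by (intro measurable_of_finitely_many[where g=g and J=J and Y=Y]) (auto simp: sN X)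
  from measurable_sets[OF this, of A] show ?thesis by (simp add: sN)
qed

lemma gen_sigma_subset_gen_sigma:
  fixes Y :: "'k \<Rightarrow> 'a \<Rightarrow> int"
  assumes "\<And>i. i \<in> I \<Longrightarrow>
    \<exists>J g. finite J \<and> J \<subseteq> K \<and> (\<forall>\<omega>\<in>\<Omega>. X i \<omega> = g (\<lambda>k. if k \<in> J then Y k \<omega> else 0))"
  shows "gen_sigma \<Omega> X I \<subseteq> gen_sigma \<Omega> Y K"
proof -
  have "(\<Union>i\<in>I. {X i -` A \<inter> \<Omega> | A. True}) \<subseteq> gen_sigma \<Omega> Y K"
  proof safe
    fix i A assume "i \<in> I"
    then obtain J g where "finite J" "J \<subseteq> K"
      and "\<forall>\<omega>\<in>\<Omega>. X i \<omega> = g (\<lambda>k. if k \<in> J then Y k \<omega> else 0)"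
      using assms by meson
    then show "X i -` A \<inter> \<Omega> \<in> gen_sigma \<Omega> Y K" by (intro vimage_in_gen_sigma) auto
  qed
  then show ?thesis
    unfolding gen_sigma_def[of \<Omega> X] gen_sigma_def[of \<Omega> Y] by (rule sigma_sets_mono)
qed

lemma gen_sigma_case_nat_subset:
  "gen_sigma \<Omega> (case_nat X Y) {..Suc n} \<subseteq> sigma_sets \<Omega> (gen_sigma \<Omega> Y {..n} \<union> gen_sigma \<Omega> (\<lambda>_. X) {()})"
proof -
  have "case_nat X Y i -` A \<inter> \<Omega> \<in> gen_sigma \<Omega> Y {..n} \<union> gen_sigma \<Omega> (\<lambda>_. X) {()}"
    if "i \<in> {..Suc n}" for i A
  proof (cases i)
    case 0
    then have "case_nat X Y i -` A \<inter> \<Omega> \<in> gen_sigma \<Omega> (\<lambda>_. X) {()}"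
      unfolding gen_sigma_def by (intro sigma_sets.Basic) auto
    then show ?thesis ..
  next
    case (Suc k)
    with that have "case_nat X Y i -` A \<inter> \<Omega> \<in> gen_sigma \<Omega> Y {..n}"
      unfolding gen_sigma_def by (intro sigma_sets.Basic) auto
    then show ?thesis ..
  qed
  then show ?thesis
    unfolding gen_sigma_def[of \<Omega> "case_nat X Y"] by (intro sigma_sets_mono) auto
qed

lemma vimage_in_sigma_sets_points:
  fixes f :: "'a \<Rightarrow> 'b :: countable"
  shows "f -` A \<inter> \<Omega> \<in> sigma_sets \<Omega> {f -` {b} \<inter> \<Omega> | b. True}"
proof -
  have "f -` A \<inter> \<Omega> = \<Union> ((\<lambda>b. f -` {b} \<inter> \<Omega>) ` A)" by auto
  also have "\<dots> \<in> sigma_sets \<Omega> {f -` {b} \<inter> \<Omega> | b. True}"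
    by (rule sigma_sets_UNION) (auto intro: sigma_sets.Basic)
  finally show ?thesis .
qed

lemma gen_sigma_cong:
  assumes "\<And>i \<omega>. i \<in> I \<Longrightarrow> \<omega> \<in> \<Omega> \<Longrightarrow> X i \<omega> = Y i \<omega>"
  shows "gen_sigma \<Omega> X I = gen_sigma \<Omega> Y I"
proof -
  have "X i -` A \<inter> \<Omega> = Y i -` A \<inter> \<Omega>" if "i \<in> I" for i A
    using assms[OF that] by auto
  then have "(\<Union>i\<in>I. {X i -` A \<inter> \<Omega> | A. True}) = (\<Union>i\<in>I. {Y i -` A \<inter> \<Omega> | A. True})"
    by (intro SUP_cong refl) auto
  then show ?thesis unfolding gen_sigma_def by simp
qed

section \<open>Fair sign sequences\<close>

text \<open>For \<open>\<plusminus>1\<close>-valued measurable steps this is equivalent to independence and uniform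
  marginals (\<open>fair_signs_srw\<close>, \<open>srwI\<close>), but it is much easier to transport along \<open>T\<close>.\<close>
definition fair_signs :: "'a measure \<Rightarrow> (nat \<Rightarrow> 'a \<Rightarrow> int) \<Rightarrow> bool" where
  "fair_signs M \<xi> \<longleftrightarrow> (\<forall>n w. (\<forall>i<n. w i \<in> {-1, 1}) \<longrightarrow>
      measure M {\<omega>\<in>space M. \<forall>i<n. \<xi> i \<omega> = w i} = 1 / 2 ^ n)"

context prob_space begin

lemma fair_signs_srw:
  assumes "srw M S"
  shows "fair_signs M (\<lambda>i \<omega>. S \<omega> (Suc i) - S \<omega> i)"
  unfolding fair_signs_def
proof (intro allI impI)
  fix n and w :: "nat \<Rightarrow> int"
  assume w: "\<forall>i<n. w i \<in> {-1, 1}"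
  define \<xi> where "\<xi> = (\<lambda>i \<omega>. S \<omega> (Suc i) - S \<omega> i)"
  have meas: "\<xi> i \<in> measurable M (count_space UNIV)" for i
    using assms unfolding srw_def \<xi>_def by auto
  have ind: "indep_vars (\<lambda>_. count_space UNIV) \<xi> UNIV"
    using assms unfolding srw_def \<xi>_def by auto
  have single: "prob (\<xi> i -` {a} \<inter> space M) = (if a \<in> {-1, 1} then 1/2 else 0)" for i a
  proof -
    have "prob (\<xi> i -` {a} \<inter> space M) = measure (distr M (count_space UNIV) (\<xi> i)) {a}"
      by (rule measure_distr[symmetric]) (auto simp: meas)
    also have "\<dots> = measure (measure_pmf (pmf_of_set {-1, 1::int})) {a}"
      using assms unfolding srw_def \<xi>_def by auto
    also have "\<dots> = (if a \<in> {-1, 1} then 1/2 else 0)"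
      by (simp add: measure_pmf_single)
    finally show ?thesis .
  qed
  show "prob {\<omega>\<in>space M. \<forall>i<n. \<xi> i \<omega> = w i} = 1 / 2 ^ n"
  proof (cases "n = 0")
    case True then show ?thesis by (simp add: prob_space)
  next
    case False
    have eq: "{\<omega>\<in>space M. \<forall>i<n. \<xi> i \<omega> = w i} = (\<Inter>i\<in>{..<n}. \<xi> i -` {w i} \<inter> space M)"
      using False by auto
    have "prob (\<Inter>i\<in>{..<n}. \<xi> i -` {w i} \<inter> space M) = (\<Prod>i\<in>{..<n}. prob (\<xi> i -` {w i} \<inter> space M))"
      by (rule indep_varsD[OF ind]) (use False in auto)
    also have "\<dots> = (\<Prod>i\<in>{..<n}. 1/2)"
      by (intro prod.cong refl) (use w single in auto)
    finally show ?thesis unfolding eq by (simp add: power_one_over)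
  qed
qed

lemma event_coordinates_eq:
  assumes "\<And>i. \<xi> i \<in> measurable M (count_space UNIV)" "finite J"
  shows "{\<omega>\<in>space M. \<forall>j\<in>J. \<xi> j \<omega> = v j} \<in> events"
proof (rule sets.sets_Collect_finite_All[OF _ assms(2)])
  fix j
  have "{\<omega>\<in>space M. \<xi> j \<omega> = v j} = \<xi> j -` {v j} \<inter> space M" by auto
  then show "{\<omega>\<in>space M. \<xi> j \<omega> = v j} \<in> events"
    using measurable_sets[OF assms(1), of "{v j}" j] by simp
qed

lemma prob_fair_signs_subset:
  assumes fair: "fair_signs M \<xi>" and meas: "\<And>i. \<xi> i \<in> measurable M (count_space UNIV)"
    and pm: "\<And>\<omega> i. \<omega> \<in> space M \<Longrightarrow> \<xi> i \<omega> \<in> {-1, 1}"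
    and "J \<subseteq> {..<n}" "\<forall>j\<in>J. v j \<in> {-1, 1}"
  shows "prob {\<omega>\<in>space M. \<forall>j\<in>J. \<xi> j \<omega> = v j} = 1 / 2 ^ card J"
  using assms(4,5)
proof (induction "card ({..<n} - J)" arbitrary: J v)
  case 0
  then have J: "J = {..<n}" by auto
  then have "{\<omega>\<in>space M. \<forall>j\<in>J. \<xi> j \<omega> = v j} = {\<omega>\<in>space M. \<forall>i<n. \<xi> i \<omega> = v i}" by auto
  with 0 J show ?case using fair[unfolded fair_signs_def, rule_format, of n v] by simp
next
  case (Suc k)
  then obtain m where m: "m \<in> {..<n} - J" by (metis card.empty ex_in_conv nat.distinct(1))
  have "finite J" using Suc.prems(1) finite_subset by blast
  let ?E = "\<lambda>c. {\<omega>\<in>space M. \<forall>j\<in>insert m J. \<xi> j \<omega> = (v(m := c)) j}"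
  have k: "k = card ({..<n} - insert m J)"
    using Suc.hyps(2) m by (metis Diff_insert card_Diff_singleton diff_Suc_1 finite_Diff finite_lessThan)
  have prob_E: "prob (?E c) = 1 / 2 ^ Suc (card J)" if "c \<in> {-1, 1}" for c
  proof -
    have "insert m J \<subseteq> {..<n}" "\<forall>j\<in>insert m J. (v(m := c)) j \<in> {-1, 1}"
      using Suc.prems m that by auto
    from Suc.hyps(1)[OF k this] show ?thesis using m \<open>finite J\<close> by simp
  qed
  have "{\<omega>\<in>space M. \<forall>j\<in>J. \<xi> j \<omega> = v j} = ?E 1 \<union> ?E (-1)"
    using m pm by (auto split: if_splits)
  moreover have "?E c \<in> events" for c
    by (rule event_coordinates_eq[OF meas]) (use \<open>finite J\<close> in simp)
  moreover have "?E 1 \<inter> ?E (-1) = {}" by auto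
  ultimately have "prob {\<omega>\<in>space M. \<forall>j\<in>J. \<xi> j \<omega> = v j} = prob (?E 1) + prob (?E (-1))"
    by (simp add: finite_measure_Union)
  then show ?case using prob_E[of 1] prob_E[of "-1"] by simp
qed

lemma prob_fair_signs:
  assumes fair: "fair_signs M \<xi>" and meas: "\<And>i. \<xi> i \<in> measurable M (count_space UNIV)"
    and pm: "\<And>\<omega> i. \<omega> \<in> space M \<Longrightarrow> \<xi> i \<omega> \<in> {-1, 1}" and J: "finite J"
  shows "prob {\<omega>\<in>space M. \<forall>j\<in>J. \<xi> j \<omega> = v j} = (if \<forall>j\<in>J. v j \<in> {-1, 1} then 1 / 2 ^ card J else 0)"
proof (cases "\<forall>j\<in>J. v j \<in> {-1, 1}")
  case True
  obtain n where "J \<subseteq> {..<n}" using J by (meson finite_nat_iff_bounded subset_eq lessThan_iff)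
  then show ?thesis using prob_fair_signs_subset[OF fair meas pm] True by auto
next
  case False
  then obtain j where j: "j \<in> J" "v j \<notin> {-1, 1}" by blast
  have E: "{\<omega>\<in>space M. \<forall>j\<in>J. \<xi> j \<omega> = v j} = {}"
  proof (rule ccontr)
    assume "{\<omega>\<in>space M. \<forall>j\<in>J. \<xi> j \<omega> = v j} \<noteq> {}"
    then obtain \<omega> where "\<omega> \<in> space M" "\<forall>j\<in>J. \<xi> j \<omega> = v j" by blast
    then show False using pm[of \<omega> j] j by auto
  qed
  show ?thesis using False by (subst E) simp
qed

lemma distr_fair_signs:
  assumes fair: "fair_signs M \<xi>" and meas: "\<And>i. \<xi> i \<in> measurable M (count_space UNIV)"
    and pm: "\<And>\<omega> i. \<omega> \<in> space M \<Longrightarrow> \<xi> i \<omega> \<in> {-1, 1}"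
  shows "distr M (count_space UNIV) (\<xi> i) = measure_pmf (pmf_of_set {-1, 1})"
proof (rule measure_eqI_countable[where A=UNIV])
  fix a :: int
  have "emeasure (distr M (count_space UNIV) (\<xi> i)) {a} = ennreal (prob (\<xi> i -` {a} \<inter> space M))"
    by (simp add: emeasure_distr meas emeasure_eq_measure)
  also have "\<xi> i -` {a} \<inter> space M = {\<omega>\<in>space M. \<forall>j\<in>{i}. \<xi> j \<omega> = a}" by auto
  also have "prob \<dots> = (if a \<in> {-1, 1} then 1 / 2 else 0)"
    using prob_fair_signs[OF fair meas pm, of "{i}" "\<lambda>_. a"] by simp
  also have "ennreal \<dots> = emeasure (measure_pmf (pmf_of_set {-1, 1})) {a}"
    by (simp add: emeasure_pmf_single)
  finally show "emeasure (distr M (count_space UNIV) (\<xi> i)) {a} = emeasure (measure_pmf (pmf_of_set {-1, 1})) {a}" .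
qed auto

lemma indep_sets_fair_signs_points:
  assumes fair: "fair_signs M \<xi>" and meas: "\<And>i. \<xi> i \<in> measurable M (count_space UNIV)"
    and pm: "\<And>\<omega> i. \<omega> \<in> space M \<Longrightarrow> \<xi> i \<omega> \<in> {-1, 1}"
  shows "indep_sets (\<lambda>i. {\<xi> i -` {a} \<inter> space M | a. True}) UNIV"
proof (rule indep_setsI)
  show "{\<xi> i -` {a} \<inter> space M | a. True} \<subseteq> events" for i
    using measurable_sets[OF meas] by auto
  fix A J assume J: "J \<noteq> {}" "J \<subseteq> UNIV" "finite J" and A: "\<forall>j\<in>J. A j \<in> {\<xi> j -` {a} \<inter> space M | a. True}"
  then have "\<forall>j\<in>J. \<exists>a. A j = \<xi> j -` {a} \<inter> space M" by auto
  then obtain a where a: "\<And>j. j \<in> J \<Longrightarrow> A j = \<xi> j -` {a j} \<inter> space M" by metis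
  have "(\<Inter>j\<in>J. A j) = {\<omega>\<in>space M. \<forall>j\<in>J. \<xi> j \<omega> = a j}" using a J(1) by auto
  then have l: "prob (\<Inter>j\<in>J. A j) = (if \<forall>j\<in>J. a j \<in> {-1, 1} then 1 / 2 ^ card J else 0)"
    using prob_fair_signs[OF fair meas pm J(3)] by simp
  have s: "prob (A j) = (if a j \<in> {-1, 1} then 1/2 else 0)" if "j \<in> J" for j
  proof -
    have "A j = {\<omega>\<in>space M. \<forall>i\<in>{j}. \<xi> i \<omega> = a i}" using a[OF that] by auto
    then show ?thesis using prob_fair_signs[OF fair meas pm, of "{j}" a] by simp
  qed
  show "prob (\<Inter>j\<in>J. A j) = (\<Prod>j\<in>J. prob (A j))"
  proof (cases "\<forall>j\<in>J. a j \<in> {-1, 1}")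
    case True
    then have "(\<Prod>j\<in>J. prob (A j)) = (\<Prod>j\<in>J. 1/2)" using s by (intro prod.cong) auto
    then show ?thesis using l True by (simp add: power_one_over)
  next
    case False
    then obtain j where j: "j \<in> J" "a j \<notin> {-1, 1}" by blast
    then have "(\<Prod>j\<in>J. prob (A j)) = 0" using s J(3) by (intro prod_zero) auto
    then show ?thesis using l False by simp
  qed
qed

lemma indep_vars_fair_signs:
  assumes fair: "fair_signs M \<xi>" and meas: "\<And>i. \<xi> i \<in> measurable M (count_space UNIV)"
    and pm: "\<And>\<omega> i. \<omega> \<in> space M \<Longrightarrow> \<xi> i \<omega> \<in> {-1, 1}"
  shows "indep_vars (\<lambda>_. count_space UNIV) \<xi> UNIV"
proof -
  define G where "G i = {\<xi> i -` {a} \<inter> space M | a. True}" for i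
  have "Int_stable (G i)" for i
  proof (rule Int_stableI)
    fix A B assume "A \<in> G i" "B \<in> G i"
    then obtain a b where ab: "A = \<xi> i -` {a} \<inter> space M" "B = \<xi> i -` {b} \<inter> space M"
      unfolding G_def by auto
    have "\<xi> i \<omega> \<noteq> 2" if "\<omega> \<in> space M" for \<omega>
      using pm[OF that, of i] by auto
    \<comment> \<open>so \<open>{}\<close>, the meet of two distinct point preimages, is the preimage of \<open>2\<close>\<close>
    then have "\<xi> i -` {2} \<inter> space M = {}" by auto
    then show "A \<inter> B \<in> G i"
      using ab unfolding G_def by (cases "a = b") auto
  qed
  with indep_sets_fair_signs_points[OF fair meas pm]
  have "indep_sets (\<lambda>i. sigma_sets (space M) (G i)) UNIV"
    unfolding G_def by (rule indep_sets_sigma)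
  then have "indep_sets (\<lambda>i. {\<xi> i -` A \<inter> space M | A. A \<in> sets (count_space UNIV)}) UNIV"
  proof (rule indep_sets_mono_sets)
    show "{\<xi> i -` A \<inter> space M | A. A \<in> sets (count_space UNIV)} \<subseteq> sigma_sets (space M) (G i)" for i
      unfolding G_def using vimage_in_sigma_sets_points[of "\<xi> i"] by blast
  qed
  then show ?thesis unfolding indep_vars_def2 using meas by auto
qed

lemma srwI:
  assumes "\<And>\<omega>. \<omega> \<in> space M \<Longrightarrow> S \<omega> 0 = 0"
    and pm: "\<And>\<omega> i. \<omega> \<in> space M \<Longrightarrow> S \<omega> (Suc i) - S \<omega> i \<in> {-1, 1}"
    and meas: "\<And>i. (\<lambda>\<omega>. S \<omega> (Suc i) - S \<omega> i) \<in> measurable M (count_space UNIV)"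
    and fair: "fair_signs M (\<lambda>i \<omega>. S \<omega> (Suc i) - S \<omega> i)"
  shows "srw M S"
  unfolding srw_def
  using assms prob_space_axioms indep_vars_fair_signs[OF fair meas pm] distr_fair_signs[OF fair meas pm] by auto

end

lemma srw_simple_path: "srw M S \<Longrightarrow> \<omega> \<in> space M \<Longrightarrow> simple_path (S \<omega>)"
  unfolding srw_def simple_path_def by auto

lemma srw_measurable:
  assumes "srw M S"
  shows "(\<lambda>\<omega>. S \<omega> i) \<in> measurable M (count_space UNIV)"
proof (rule measurable_of_finitely_many[where J="{..<i}" and Y="\<lambda>k \<omega>. S \<omega> (Suc k) - S \<omega> k"
      and g="\<lambda>v. walk v i"])
  fix \<omega> assume "\<omega> \<in> space M"
  then have "walk (\<lambda>k. S \<omega> (Suc k) - S \<omega> k) = S \<omega>"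
    using assms by (intro walk_increments) (simp add: srw_def)
  then show "S \<omega> i = walk (\<lambda>k. if k \<in> {..<i} then S \<omega> (Suc k) - S \<omega> k else 0) i"
    using walk_cong[of i "\<lambda>k. if k \<in> {..<i} then S \<omega> (Suc k) - S \<omega> k else 0"
        "\<lambda>k. S \<omega> (Suc k) - S \<omega> k"] by simp
qed (use assms in \<open>auto simp: srw_def\<close>)

lemma srw_uminus:
  assumes srw: "srw M S"
  shows "srw M (\<lambda>\<omega> n. - S \<omega> n)"
proof -
  interpret prob_space M using srw unfolding srw_def by auto
  have fair: "fair_signs M (\<lambda>i \<omega>. S \<omega> (Suc i) - S \<omega> i)"
    by (rule fair_signs_srw[OF srw])
  show ?thesis
  proof (rule srwI)
    show "\<omega> \<in> space M \<Longrightarrow> - S \<omega> 0 = 0" for \<omega>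
      using srw unfolding srw_def by auto
    show "\<omega> \<in> space M \<Longrightarrow> - S \<omega> (Suc i) - - S \<omega> i \<in> {-1, 1}" for \<omega> i
      using simple_path_uminus[OF srw_simple_path[OF srw]] by (simp add: simple_path_def)
    show "(\<lambda>\<omega>. - S \<omega> (Suc i) - - S \<omega> i) \<in> measurable M (count_space UNIV)" for i
      by (rule measurable_of_finitely_many[where J="{i}" and Y="\<lambda>i \<omega>. S \<omega> (Suc i) - S \<omega> i"
            and g="\<lambda>v. - v i"]) (use srw in \<open>auto simp: srw_def\<close>)
    show "fair_signs M (\<lambda>i \<omega>. - S \<omega> (Suc i) - - S \<omega> i)"
      unfolding fair_signs_def
    proof (intro allI impI)
      fix n and w :: "nat \<Rightarrow> int"
      assume "\<forall>i<n. w i \<in> {-1, 1}"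
      then have "\<forall>i<n. - w i \<in> {-1, 1}" by auto
      moreover have "{\<omega>\<in>space M. \<forall>i<n. - S \<omega> (Suc i) - - S \<omega> i = w i} =
          {\<omega>\<in>space M. \<forall>i<n. S \<omega> (Suc i) - S \<omega> i = - w i}"
        by auto
      ultimately show "prob {\<omega>\<in>space M. \<forall>i<n. - S \<omega> (Suc i) - - S \<omega> i = w i} = 1 / 2 ^ n"
        using fair[unfolded fair_signs_def, rule_format, of n "\<lambda>i. - w i"] by simp
    qed
  qed
qed

definition prefix_fun :: "nat \<Rightarrow> (nat \<Rightarrow> int) \<Rightarrow> nat \<Rightarrow> int" where
  "prefix_fun n f = (\<lambda>i. if i < n then f i else 0)"

definition sign_patterns :: "nat \<Rightarrow> (nat \<Rightarrow> int) set" where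
  "sign_patterns n = {w. (\<forall>i<n. w i \<in> {-1, 1}) \<and> (\<forall>i\<ge>n. w i = 0)}"

lemma finite_sign_patterns: "finite (sign_patterns n)"
proof (rule finite_subset)
  show "sign_patterns n \<subseteq> (\<lambda>f. prefix_fun n f) ` (PiE {..<n} (\<lambda>_. {-1, 1}))"
  proof
    fix w assume "w \<in> sign_patterns n"
    then show "w \<in> (\<lambda>f. prefix_fun n f) ` (PiE {..<n} (\<lambda>_. {-1, 1}))"
      by (intro image_eqI[where x="restrict w {..<n}"]) (auto simp: sign_patterns_def prefix_fun_def)
  qed
qed (intro finite_imageI finite_PiE; simp)

lemma sign_patterns_eqI:
  assumes "v \<in> sign_patterns n" "w \<in> sign_patterns n" "\<And>i. i < n \<Longrightarrow> v i = w i"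
  shows "v = w"
proof
  show "v i = w i" for i
    using assms by (cases "i < n") (auto simp: sign_patterns_def)
qed

lemma sign_patterns_uminus: "(\<lambda>i. - w i) \<in> sign_patterns n \<longleftrightarrow> w \<in> sign_patterns n"
  by (auto simp: sign_patterns_def)

lemma event_prefix_fun:
  assumes "\<And>i. \<xi> i \<in> measurable M (count_space UNIV)"
  shows "{\<omega>\<in>space M. prefix_fun n (\<lambda>i. \<xi> i \<omega>) \<in> X} \<in> sets M"
proof -
  have "(\<lambda>\<omega>. prefix_fun n (\<lambda>i. \<xi> i \<omega>) \<in> X) \<in> measurable M (count_space UNIV)"
    by (rule measurable_of_finitely_many[where J="{..<n}" and Y=\<xi> and g="\<lambda>v. v \<in> X"])
      (auto simp: assms prefix_fun_def)
  from measurable_sets[OF this, of "{True}"] show ?thesis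
    by (simp add: vimage_def Int_def conj_commute)
qed

context prob_space begin

lemma prob_prefix_fun_in:
  assumes fair: "fair_signs M \<xi>" and meas: "\<And>i. \<xi> i \<in> measurable M (count_space UNIV)"
    and pm: "\<And>\<omega> i. \<omega> \<in> space M \<Longrightarrow> \<xi> i \<omega> \<in> {-1, 1}"
  shows "prob {\<omega>\<in>space M. prefix_fun n (\<lambda>i. \<xi> i \<omega>) \<in> W} = card (W \<inter> sign_patterns n) / 2 ^ n"
proof -
  define E where "E w = {\<omega>\<in>space M. \<forall>i<n. \<xi> i \<omega> = w i}" for w
  have "{\<omega>\<in>space M. prefix_fun n (\<lambda>i. \<xi> i \<omega>) \<in> W} = (\<Union>w\<in>W \<inter> sign_patterns n. E w)"
  proof (intro equalityI subsetI)
    fix \<omega> assume \<omega>: "\<omega> \<in> {\<omega>\<in>space M. prefix_fun n (\<lambda>i. \<xi> i \<omega>) \<in> W}"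
    then have "prefix_fun n (\<lambda>i. \<xi> i \<omega>) \<in> sign_patterns n"
      using pm by (auto simp: prefix_fun_def sign_patterns_def)
    with \<omega> show "\<omega> \<in> (\<Union>w\<in>W \<inter> sign_patterns n. E w)"
      by (auto simp: E_def prefix_fun_def intro!: bexI[where x="prefix_fun n (\<lambda>i. \<xi> i \<omega>)"])
  next
    fix \<omega> assume "\<omega> \<in> (\<Union>w\<in>W \<inter> sign_patterns n. E w)"
    then obtain w where w: "w \<in> W" "w \<in> sign_patterns n" "\<omega> \<in> E w" by auto
    then have "prefix_fun n (\<lambda>i. \<xi> i \<omega>) = w"
      by (auto simp: E_def prefix_fun_def sign_patterns_def)
    with w show "\<omega> \<in> {\<omega>\<in>space M. prefix_fun n (\<lambda>i. \<xi> i \<omega>) \<in> W}" by (auto simp: E_def)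
  qed
  moreover have "prob (\<Union>w\<in>W \<inter> sign_patterns n. E w) = (\<Sum>w\<in>W \<inter> sign_patterns n. prob (E w))"
  proof (rule finite_measure_finite_Union)
    show "finite (W \<inter> sign_patterns n)" using finite_sign_patterns by auto
    have "E w \<in> events" for w
    proof -
      have "E w = {\<omega>\<in>space M. \<forall>i\<in>{..<n}. \<xi> i \<omega> = w i}" unfolding E_def by auto
      then show ?thesis by (simp only:) (rule event_coordinates_eq[OF meas], simp)
    qed
    then show "E ` (W \<inter> sign_patterns n) \<subseteq> events" by blast
    show "disjoint_family_on E (W \<inter> sign_patterns n)"
    unfolding disjoint_family_on_def proof (intro ballI impI)
      fix v w assume vw: "v \<in> W \<inter> sign_patterns n" "w \<in> W \<inter> sign_patterns n" "v \<noteq> w"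
      then obtain i where "i < n" "v i \<noteq> w i" using sign_patterns_eqI[of v n w] by blast
      then show "E v \<inter> E w = {}" unfolding E_def by auto
    qed
  qed
  moreover have "prob (E w) = 1 / 2 ^ n" if "w \<in> sign_patterns n" for w
    using fair[unfolded fair_signs_def, rule_format, of n w] that
    unfolding E_def sign_patterns_def by auto
  ultimately show ?thesis by simp
qed

lemma prob_prefix_fun_uminus_in:
  assumes fair: "fair_signs M \<xi>" and meas: "\<And>i. \<xi> i \<in> measurable M (count_space UNIV)"
    and pm: "\<And>\<omega> i. \<omega> \<in> space M \<Longrightarrow> \<xi> i \<omega> \<in> {-1, 1}"
  shows "prob {\<omega>\<in>space M. (\<lambda>i. - prefix_fun n (\<lambda>i. \<xi> i \<omega>) i) \<in> W} =
         prob {\<omega>\<in>space M. prefix_fun n (\<lambda>i. \<xi> i \<omega>) \<in> W}"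
proof -
  define neg :: "(nat \<Rightarrow> int) \<Rightarrow> nat \<Rightarrow> int" where "neg w = (\<lambda>i. - w i)" for w
  have "bij_betw neg (neg -` W \<inter> sign_patterns n) (W \<inter> sign_patterns n)"
    by (rule bij_betwI[where g=neg]) (auto simp: neg_def sign_patterns_uminus)
  then have "card (neg -` W \<inter> sign_patterns n) = card (W \<inter> sign_patterns n)"
    by (rule bij_betw_same_card)
  moreover have "{\<omega>\<in>space M. (\<lambda>i. - prefix_fun n (\<lambda>i. \<xi> i \<omega>) i) \<in> W} =
      {\<omega>\<in>space M. prefix_fun n (\<lambda>i. \<xi> i \<omega>) \<in> neg -` W}"
    by (auto simp: neg_def)
  ultimately show ?thesis by (simp only: prob_prefix_fun_in[OF fair meas pm])
qed

end

section \<open>The transform of a simple random walk\<close>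

theorem srw_sigma_cv_T_first_step:
  assumes "srw M S"
  shows "sigma_sets (space M)
              (gen_sigma (space M) (\<lambda>j \<omega>. cv_T (S \<omega>) j) {..n}
               \<union> gen_sigma (space M) (\<lambda>_ \<omega>. S \<omega> 1) {()})
           = gen_sigma (space M) (\<lambda>j \<omega>. S \<omega> j) {..Suc n}"
    (is "sigma_sets ?\<Omega> (?T \<union> ?F) = ?S")
proof
  have "?T \<subseteq> ?S"
  proof (rule gen_sigma_subset_gen_sigma)
    fix j assume "j \<in> {..n}"
    have "cv_T (S \<omega>) j = cv_T (\<lambda>k. if k \<in> {..Suc j} then S \<omega> k else 0) j" for \<omega>
      by (rule cv_T_cong) simp
    with \<open>j \<in> {..n}\<close> show "\<exists>J g. finite J \<and> J \<subseteq> {..Suc n} \<and>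
        (\<forall>\<omega>\<in>?\<Omega>. cv_T (S \<omega>) j = g (\<lambda>k. if k \<in> J then S \<omega> k else 0))"
      by (intro exI[of _ "{..Suc j}"] exI[of _ "\<lambda>v. cv_T v j"]) auto
  qed
  moreover have "?F \<subseteq> ?S"
    by (rule gen_sigma_subset_gen_sigma, intro exI[of _ "{1}"] exI[of _ "\<lambda>v. v 1"]) auto
  ultimately show "sigma_sets ?\<Omega> (?T \<union> ?F) \<subseteq> ?S"
    unfolding gen_sigma_def[of ?\<Omega> "\<lambda>j \<omega>. S \<omega> j"] by (intro sigma_sets_mono) auto
next
  define Z where "Z = case_nat (\<lambda>\<omega>. S \<omega> 1) (\<lambda>k \<omega>. cv_T (S \<omega>) k)"
  have "?S \<subseteq> gen_sigma ?\<Omega> Z {..Suc n}"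
  proof (rule gen_sigma_subset_gen_sigma)
    fix j assume j: "j \<in> {..Suc n}"
    have "S \<omega> j = cv_inv (\<lambda>i. (if Suc i \<in> {..Suc n} then Z (Suc i) \<omega> else 0)) (Z 0 \<omega>) j"
      if "\<omega> \<in> ?\<Omega>" for \<omega>
    proof -
      have "S \<omega> j = cv_inv (cv_T (S \<omega>)) (S \<omega> 1) j"
        using cv_inv_cv_T[OF srw_simple_path[OF assms that]] by simp
      also have "\<dots> = cv_inv (\<lambda>i. (if Suc i \<in> {..Suc n} then Z (Suc i) \<omega> else 0)) (Z 0 \<omega>) j"
      proof -
        have "cv_T (S \<omega>) i = (if Suc i \<in> {..Suc n} then Z (Suc i) \<omega> else 0)" if "i < j" for i
          using that j by (simp add: Z_def)
        from cv_inv_cong[where e="S \<omega> 1", OF this] show ?thesis by (simp add: Z_def)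
      qed
      finally show ?thesis .
    qed
    then show "\<exists>J g. finite J \<and> J \<subseteq> {..Suc n} \<and>
        (\<forall>\<omega>\<in>?\<Omega>. S \<omega> j = g (\<lambda>k. if k \<in> J then Z k \<omega> else 0))"
      by (intro exI[of _ "{..Suc n}"] exI[of _ "\<lambda>v. cv_inv (\<lambda>i. v (Suc i)) (v 0) j"]) auto
  qed
  also have "gen_sigma ?\<Omega> Z {..Suc n} \<subseteq> sigma_sets ?\<Omega> (?T \<union> ?F)"
    unfolding Z_def by (rule gen_sigma_case_nat_subset)
  finally show "?S \<subseteq> sigma_sets ?\<Omega> (?T \<union> ?F)" .
qed

lemma prefix_fun_prefix_fun: "n \<le> m \<Longrightarrow> prefix_fun n (prefix_fun m f) = prefix_fun n f"
  by (auto simp: prefix_fun_def)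

lemma prefix_fun_cv_T_walk:
  assumes "s 0 = 0"
  shows "prefix_fun n (cv_T s) = prefix_fun n (cv_T (walk (prefix_fun (Suc n) (\<lambda>i. s (Suc i) - s i))))"
proof -
  have "s i = walk (prefix_fun (Suc n) (\<lambda>i. s (Suc i) - s i)) i" if "i \<le> n" for i
    using that walk_cong[of i "prefix_fun (Suc n) (\<lambda>i. s (Suc i) - s i)" "\<lambda>i. s (Suc i) - s i"]
      walk_increments[of s, OF assms] by (simp add: prefix_fun_def)
  then have "cv_T s j = cv_T (walk (prefix_fun (Suc n) (\<lambda>i. s (Suc i) - s i))) j" if "j < n" for j
    using that by (intro cv_T_cong) auto
  then show ?thesis by (auto simp: prefix_fun_def)
qed

lemma srw_cv_T_event:
  assumes "srw M S"
  shows "{\<omega>\<in>space M. Q (prefix_fun n (cv_T (S \<omega>)))} \<in> sets M"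
proof -
  have "(\<lambda>\<omega>. Q (prefix_fun n (cv_T (S \<omega>)))) \<in> measurable M (count_space UNIV)"
  proof (rule measurable_of_finitely_many[where J="{..<Suc n}" and Y="\<lambda>i \<omega>. S \<omega> (Suc i) - S \<omega> i"
        and g="\<lambda>v. Q (prefix_fun n (cv_T (walk v)))"])
    fix \<omega> assume "\<omega> \<in> space M"
    then have "S \<omega> 0 = 0" using assms by (simp add: srw_def)
    from prefix_fun_cv_T_walk[of "S \<omega>" n, OF this]
    show "Q (prefix_fun n (cv_T (S \<omega>))) =
        Q (prefix_fun n (cv_T (walk (\<lambda>i. if i \<in> {..<Suc n} then S \<omega> (Suc i) - S \<omega> i else 0))))"
      by (simp add: prefix_fun_def)
  qed (use assms in \<open>auto simp: srw_def\<close>)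
  from measurable_sets[OF this, of "{True}"] show ?thesis
    by (simp add: vimage_def Int_def conj_commute)
qed

lemma (in prob_space) prob_first_step_and_cv_T_event:
  assumes srw: "srw M S" and c: "c \<in> {-1, 1}"
  shows "prob {\<omega>\<in>space M. S \<omega> 1 = c \<and> Q (prefix_fun n (cv_T (S \<omega>)))} =
         prob {\<omega>\<in>space M. Q (prefix_fun n (cv_T (S \<omega>)))} / 2"
proof -
  define \<xi> where "\<xi> = (\<lambda>i \<omega>. S \<omega> (Suc i) - S \<omega> i)"
  have meas: "\<xi> i \<in> measurable M (count_space UNIV)" for i
    using srw unfolding srw_def \<xi>_def by auto
  have pm: "\<omega> \<in> space M \<Longrightarrow> \<xi> i \<omega> \<in> {-1, 1}" for \<omega> i
    using srw unfolding srw_def \<xi>_def by auto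
  have fair: "fair_signs M \<xi>"
    unfolding \<xi>_def by (rule fair_signs_srw[OF srw])
  define V where "V \<omega> = prefix_fun (Suc n) (\<lambda>i. \<xi> i \<omega>)" for \<omega>
  define F where "F u = prefix_fun n (cv_T (walk u))" for u
  define W where "W d = {u. u 0 = d \<and> Q (F u)}" for d
  have S0: "\<omega> \<in> space M \<Longrightarrow> S \<omega> 0 = 0" for \<omega>
    using srw by (simp add: srw_def)
  have V0: "\<omega> \<in> space M \<Longrightarrow> V \<omega> 0 = S \<omega> 1" for \<omega>
    using S0 by (simp add: V_def prefix_fun_def \<xi>_def)
  have FV: "\<omega> \<in> space M \<Longrightarrow> prefix_fun n (cv_T (S \<omega>)) = F (V \<omega>)" for \<omega>
    using prefix_fun_cv_T_walk[of "S \<omega>" n] S0[of \<omega>] by (simp add: F_def V_def \<xi>_def)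
  have event: "{\<omega>\<in>space M. S \<omega> 1 = d \<and> Q (prefix_fun n (cv_T (S \<omega>)))} = {\<omega>\<in>space M. V \<omega> \<in> W d}" for d
    using V0 FV by (auto simp: W_def)
  have F_uminus: "F (\<lambda>i. - u i) = F u" for u
    by (simp add: F_def walk_uminus cv_T_uminus)
  have flip: "prob {\<omega>\<in>space M. V \<omega> \<in> W (- d)} = prob {\<omega>\<in>space M. V \<omega> \<in> W d}" for d
  proof -
    have "{\<omega>\<in>space M. V \<omega> \<in> W (- d)} = {\<omega>\<in>space M. (\<lambda>i. - V \<omega> i) \<in> W d}"
      using F_uminus[of "V _"] by (auto simp: W_def)
    then show ?thesis
      unfolding V_def using prob_prefix_fun_uminus_in[OF fair meas pm] by simp
  qed
  have "{\<omega>\<in>space M. Q (prefix_fun n (cv_T (S \<omega>)))} =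
      {\<omega>\<in>space M. V \<omega> \<in> W c} \<union> {\<omega>\<in>space M. V \<omega> \<in> W (- c)}"
  proof -
    have sides: "S \<omega> 1 = c \<or> S \<omega> 1 = - c" if "\<omega> \<in> space M" for \<omega>
      using pm[OF that, of 0] S0[OF that] c by (auto simp: \<xi>_def)
    show ?thesis using V0 FV by (auto simp: W_def dest: sides[simplified])
  qed
  moreover have "{\<omega>\<in>space M. V \<omega> \<in> W d} \<in> events" for d
    unfolding V_def by (rule event_prefix_fun[OF meas])
  moreover have "{\<omega>\<in>space M. V \<omega> \<in> W c} \<inter> {\<omega>\<in>space M. V \<omega> \<in> W (- c)} = {}"
    using c by (auto simp: W_def)
  ultimately have "prob {\<omega>\<in>space M. Q (prefix_fun n (cv_T (S \<omega>)))} = 2 * prob {\<omega>\<in>space M. V \<omega> \<in> W c}"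
    using finite_measure_Union flip by simp
  then show ?thesis unfolding event by simp
qed

lemma (in prob_space) prob_first_step_cv_T_event_mult:
  fixes A :: "int set" and Q :: "(nat \<Rightarrow> int) \<Rightarrow> bool" and n :: nat
  assumes srw: "srw M S"
  defines "a \<equiv> (\<lambda>\<omega>. S \<omega> 1) -` A \<inter> space M"
    and "b \<equiv> {\<omega>\<in>space M. Q (prefix_fun n (cv_T (S \<omega>)))}"
  shows "prob (a \<inter> b) = prob a * prob b"
proof -
  have first: "\<omega> \<in> space M \<Longrightarrow> S \<omega> 1 \<in> {-1, 1}" for \<omega>
    by (rule simple_path_first[OF srw_simple_path[OF srw]])
  then have a: "a = {\<omega>\<in>space M. S \<omega> 1 \<in> A \<inter> {-1, 1}}"
    unfolding a_def by auto
  have half: "prob {\<omega>\<in>space M. S \<omega> 1 = c} = 1 / 2" if "c \<in> {-1, 1}" for c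
    using prob_first_step_and_cv_T_event[OF srw that, of "\<lambda>_. True"] prob_space by simp
  consider "A \<inter> {-1, 1} = {}" | c where "c \<in> {-1, 1}" "A \<inter> {-1, 1} = {c}"
    | "A \<inter> {-1, 1} = {-1, 1}"
    by blast
  then show ?thesis
  proof cases
    case 2
    then have "a = {\<omega>\<in>space M. S \<omega> 1 = c}"
      and "a \<inter> b = {\<omega>\<in>space M. S \<omega> 1 = c \<and> Q (prefix_fun n (cv_T (S \<omega>)))}"
      unfolding a b_def by auto
    then have pa: "prob a = 1 / 2" and pab: "prob (a \<inter> b) = prob b / 2"
      using prob_first_step_and_cv_T_event[OF srw \<open>c \<in> {-1, 1}\<close>, of Q n] half[OF \<open>c \<in> {-1, 1}\<close>]
      unfolding b_def by simp_all
    show ?thesis unfolding pa pab by simp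
  next
    case 3
    then have "a = space M" using first unfolding a by auto
    then show ?thesis by (simp add: b_def prob_space Int_absorb1)
  qed (simp add: a)
qed

lemma Int_stable_prefix_fun_events:
  "Int_stable {{\<omega>\<in>\<Omega>. Q (prefix_fun n (f \<omega>))} | n Q. True}"
proof (rule Int_stableI)
  fix a b assume "a \<in> {{\<omega>\<in>\<Omega>. Q (prefix_fun n (f \<omega>))} | n Q. True}"
    "b \<in> {{\<omega>\<in>\<Omega>. Q (prefix_fun n (f \<omega>))} | n Q. True}"
  then obtain n Q m R where "a = {\<omega>\<in>\<Omega>. Q (prefix_fun n (f \<omega>))}" "b = {\<omega>\<in>\<Omega>. R (prefix_fun m (f \<omega>))}"
    by auto
  moreover have "prefix_fun n (prefix_fun (max n m) g) = prefix_fun n g"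
      "prefix_fun m (prefix_fun (max n m) g) = prefix_fun m g" for g
    by (simp_all add: prefix_fun_prefix_fun)
  ultimately have "a \<inter> b = {\<omega>\<in>\<Omega>. (\<lambda>u. Q (prefix_fun n u) \<and> R (prefix_fun m u)) (prefix_fun (max n m) (f \<omega>))}"
    by auto
  moreover have "{\<omega>\<in>\<Omega>. P (prefix_fun k (f \<omega>))} \<in> {{\<omega>\<in>\<Omega>. Q (prefix_fun n (f \<omega>))} | n Q. True}" for k P
    by blast
  ultimately show "a \<inter> b \<in> {{\<omega>\<in>\<Omega>. Q (prefix_fun n (f \<omega>))} | n Q. True}" by simp
qed

lemma gen_sigma_subset_prefix_fun_events:
  "gen_sigma \<Omega> (\<lambda>j \<omega>. f \<omega> j) UNIV \<subseteq> sigma_sets \<Omega> {{\<omega>\<in>\<Omega>. Q (prefix_fun n (f \<omega>))} | n Q. True}"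
  unfolding gen_sigma_def
proof (rule sigma_sets_mono, safe)
  fix j :: nat and A :: "int set"
  have "(\<lambda>\<omega>. f \<omega> j) -` A \<inter> \<Omega> = {\<omega>\<in>\<Omega>. (\<lambda>u. u j \<in> A) (prefix_fun (Suc j) (f \<omega>))}"
    by (auto simp: prefix_fun_def)
  also have "\<dots> \<in> {{\<omega>\<in>\<Omega>. Q (prefix_fun n (f \<omega>))} | n Q. True}"
    by (rule CollectI, intro exI[of _ "Suc j"] exI[of _ "\<lambda>u. u j \<in> A"]) simp
  finally have "(\<lambda>\<omega>. f \<omega> j) -` A \<inter> \<Omega> \<in> {{\<omega>\<in>\<Omega>. Q (prefix_fun n (f \<omega>))} | n Q. True}" .
  then show "(\<lambda>\<omega>. f \<omega> j) -` A \<inter> \<Omega> \<in> sigma_sets \<Omega> {{\<omega>\<in>\<Omega>. Q (prefix_fun n (f \<omega>))} | n Q. True}"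
    by (rule sigma_sets.Basic)
qed

theorem srw_indep_first_step_cv_T:
  assumes srw: "srw M S"
  shows "prob_space.indep_set M (gen_sigma (space M) (\<lambda>_ \<omega>. S \<omega> 1) {()})
                                (gen_sigma (space M) (\<lambda>j \<omega>. cv_T (S \<omega>) j) UNIV)"
proof -
  interpret prob_space M using srw unfolding srw_def by auto
  define first_events where "first_events = {(\<lambda>\<omega>. S \<omega> 1) -` A \<inter> space M | A. True}"
  define cv_T_events where
    "cv_T_events = {{\<omega>\<in>space M. Q (prefix_fun n (cv_T (S \<omega>)))} | n Q. True}"
  have "Int_stable first_events"
  proof (rule Int_stableI)
    fix a b assume "a \<in> first_events" "b \<in> first_events"
    then obtain A B where "a = (\<lambda>\<omega>. S \<omega> 1) -` A \<inter> space M" "b = (\<lambda>\<omega>. S \<omega> 1) -` B \<inter> space M"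
      unfolding first_events_def by auto
    then have "a \<inter> b = (\<lambda>\<omega>. S \<omega> 1) -` (A \<inter> B) \<inter> space M" by auto
    then show "a \<inter> b \<in> first_events" unfolding first_events_def by blast
  qed
  moreover have "Int_stable cv_T_events"
    unfolding cv_T_events_def by (rule Int_stable_prefix_fun_events)
  moreover have "first_events \<subseteq> events"
    unfolding first_events_def using measurable_sets[OF srw_measurable[OF srw]] by auto
  moreover have "cv_T_events \<subseteq> events"
    unfolding cv_T_events_def using srw_cv_T_event[OF srw] by auto
  moreover have "prob (a \<inter> b) = prob a * prob b" if "a \<in> first_events" "b \<in> cv_T_events" for a b
    using that prob_first_step_cv_T_event_mult[OF srw] unfolding first_events_def cv_T_events_def by auto
  ultimately have "indep_set (sigma_sets (space M) first_events) (sigma_sets (space M) cv_T_events)"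
    by (intro indep_set_sigma_sets indep_setI)
  then have "indep_set (sigma_sets (space M) first_events) (gen_sigma (space M) (\<lambda>j \<omega>. cv_T (S \<omega>) j) UNIV)"
    unfolding indep_set_def
    by (rule indep_sets_mono_sets)
      (use gen_sigma_subset_prefix_fun_events[of "space M" "\<lambda>\<omega>. cv_T (S \<omega>)"] in
        \<open>auto simp: cv_T_events_def split: bool.split\<close>)
  then show ?thesis by (simp add: gen_sigma_def first_events_def)
qed

section \<open>Lifting a walk to a preimage\<close>

lemma AE_cv_T_eq_cases:
  assumes "srw M S" "srw M S'" "AE \<omega> in M. cv_T (S' \<omega>) = cv_T (S \<omega>)"
  shows "AE \<omega> in M. S' \<omega> = S \<omega> \<or> S' \<omega> = (\<lambda>n. - S \<omega> n)"
  using assms(3)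
proof (rule AE_mp, intro AE_I2 impI)
  fix \<omega> assume "\<omega> \<in> space M" "cv_T (S' \<omega>) = cv_T (S \<omega>)"
  then show "S' \<omega> = S \<omega> \<or> S' \<omega> = (\<lambda>n. - S \<omega> n)"
    using cv_T_eq_cases[of "S \<omega>" "S' \<omega>"] srw_simple_path[OF assms(1)] srw_simple_path[OF assms(2)]
    by simp
qed

text \<open>The walk \<open>S\<close> with \<open>T(S) = Sbar\<close> lives on \<open>M \<Otimes> coin\<close>: the coin supplies the missing
  first step \<open>S\<^sub>1\<close>, and the rest of \<open>S\<close> is recovered by \<open>cv_inv\<close>.\<close>
definition coin :: "bool measure" where
  "coin = measure_pmf (pmf_of_set UNIV)"

definition bool_sign :: "bool \<Rightarrow> int" where
  "bool_sign c = (if c then 1 else -1)"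

definition cv_lift :: "('a \<Rightarrow> nat \<Rightarrow> int) \<Rightarrow> 'a \<times> bool \<Rightarrow> nat \<Rightarrow> int" where
  "cv_lift Sbar \<omega> = cv_inv (Sbar (fst \<omega>)) (bool_sign (snd \<omega>))"

lemma bool_sign_pm_one: "bool_sign c \<in> {-1, 1}"
  by (simp add: bool_sign_def)

lemma prob_space_coin: "prob_space coin"
  unfolding coin_def by (rule prob_space_measure_pmf)

lemma space_pair_coin: "space (M \<Otimes>\<^sub>M coin) = space M \<times> UNIV"
  by (simp add: space_pair_measure coin_def)

lemma
  assumes "srw M Sbar" "\<omega> \<in> space (M \<Otimes>\<^sub>M coin)"
  shows simple_path_cv_lift: "simple_path (cv_lift Sbar \<omega>)"
    and cv_T_cv_lift: "cv_T (cv_lift Sbar \<omega>) = Sbar (fst \<omega>)"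
proof -
  have "simple_path (Sbar (fst \<omega>))"
    using srw_simple_path[OF assms(1)] assms(2) by (auto simp: space_pair_coin)
  then show "simple_path (cv_lift Sbar \<omega>)" "cv_T (cv_lift Sbar \<omega>) = Sbar (fst \<omega>)"
    unfolding cv_lift_def using bool_sign_pm_one
    by (simp_all add: simple_path_cv_inv cv_T_cv_inv simple_path_def[of "Sbar _"])
qed

lemma measurable_cv_lift_step:
  assumes "srw M Sbar"
  shows "(\<lambda>\<omega>. cv_lift Sbar \<omega> (Suc i) - cv_lift Sbar \<omega> i) \<in> measurable (M \<Otimes>\<^sub>M coin) (count_space UNIV)"
proof -
  define Y where "Y k \<omega> = (case k of 0 \<Rightarrow> bool_sign (snd \<omega>) | Suc j \<Rightarrow> Sbar (fst \<omega>) j)" for k \<omega>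
  define v where "v \<omega> = (\<lambda>k. if k \<in> {..Suc i} then Y k \<omega> else 0)" for \<omega>
  have Y_measurable: "Y k \<in> measurable (M \<Otimes>\<^sub>M coin) (count_space UNIV)" for k
  proof (cases k)
    case 0
    then show ?thesis
      unfolding Y_def by (simp add: measurable_compose[OF measurable_snd] coin_def)
  next
    case (Suc j)
    then show ?thesis
      unfolding Y_def by (simp add: measurable_compose[OF measurable_fst srw_measurable[OF assms]])
  qed
  have lift_eq: "cv_lift Sbar \<omega> j = cv_inv (\<lambda>k. v \<omega> (Suc k)) (v \<omega> 0) j" if "j \<le> Suc i" for \<omega> j
  proof -
    have first: "bool_sign (snd \<omega>) = v \<omega> 0" by (simp add: v_def Y_def)
    have "Sbar (fst \<omega>) k = v \<omega> (Suc k)" if "k < j" for k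
      using that \<open>j \<le> Suc i\<close> by (simp add: v_def Y_def)
    then show ?thesis unfolding cv_lift_def first by (rule cv_inv_cong)
  qed
  show ?thesis
    by (rule measurable_of_finitely_many[where J="{..Suc i}" and Y=Y
          and g="\<lambda>v. cv_inv (\<lambda>k. v (Suc k)) (v 0) (Suc i) - cv_inv (\<lambda>k. v (Suc k)) (v 0) i"])
      (simp_all add: Y_measurable lift_eq[unfolded v_def])
qed


lemma cv_lift_steps_event:
  assumes "srw M Sbar"
  shows "{\<omega>\<in>space (M \<Otimes>\<^sub>M coin). \<forall>i<Suc m. cv_lift Sbar \<omega> (Suc i) - cv_lift Sbar \<omega> i = w i} =
    {x\<in>space M. \<forall>k<m. Sbar x (Suc k) - Sbar x k = cv_T (walk w) (Suc k) - cv_T (walk w) k} \<times>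
    {c. bool_sign c = w 0}" (is "?E = ?A \<times> ?B")
proof -
  have key: "(\<forall>i<Suc m. cv_lift Sbar (x, c) (Suc i) - cv_lift Sbar (x, c) i = w i) \<longleftrightarrow> c \<in> ?B \<and> x \<in> ?A"
    if "x \<in> space M" for x c
    using cv_inv_steps_iff[of "Sbar x" "bool_sign c" m w] bool_sign_pm_one assms that
    by (simp add: cv_lift_def srw_def)
  show ?thesis
  proof (intro equalityI subsetI)
    fix \<omega> assume "\<omega> \<in> ?E"
    then show "\<omega> \<in> ?A \<times> ?B" using key[of "fst \<omega>" "snd \<omega>"] by (cases \<omega>) (auto simp: space_pair_coin)
  next
    fix \<omega> assume "\<omega> \<in> ?A \<times> ?B"
    then show "\<omega> \<in> ?E" using key[of "fst \<omega>" "snd \<omega>"] by (cases \<omega>) (auto simp: space_pair_coin)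
  qed
qed

lemma fair_signs_cv_lift:
  assumes srw: "srw M Sbar"
  shows "fair_signs (M \<Otimes>\<^sub>M coin) (\<lambda>i \<omega>. cv_lift Sbar \<omega> (Suc i) - cv_lift Sbar \<omega> i)"
  unfolding fair_signs_def
proof (intro allI impI)
  interpret M: prob_space M using srw unfolding srw_def by auto
  interpret coin: prob_space coin by (rule prob_space_coin)
  interpret pair_prob_space M coin ..
  fix n and w :: "nat \<Rightarrow> int"
  assume w: "\<forall>i<n. w i \<in> {-1, 1}"
  show "prob {\<omega>\<in>space (M \<Otimes>\<^sub>M coin). \<forall>i<n. cv_lift Sbar \<omega> (Suc i) - cv_lift Sbar \<omega> i = w i} = 1 / 2 ^ n"
  proof (cases n)
    case 0
    then show ?thesis by (simp add: prob_space)
  next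
    case (Suc m)
    define h where "h k = cv_T (walk w) (Suc k) - cv_T (walk w) k" for k
    define A where "A = {x\<in>space M. \<forall>k<m. Sbar x (Suc k) - Sbar x k = h k}"
    define B where "B = {c. bool_sign c = w 0}"
    have event: "{\<omega>\<in>space (M \<Otimes>\<^sub>M coin). \<forall>i<n. cv_lift Sbar \<omega> (Suc i) - cv_lift Sbar \<omega> i = w i} = A \<times> B"
      unfolding Suc A_def B_def h_def by (rule cv_lift_steps_event[OF srw])
    have prob_A: "M.prob A = 1 / 2 ^ m"
    proof -
      have "step (walk w) 1 \<in> {-1, 1}" "step (walk w) (Suc (Suc k)) \<in> {-1, 1}" if "k < m" for k
        using w that Suc by (simp_all add: step_def walk_Suc)
      then have "h k \<in> {-1, 1}" if "k < m" for k
        using cv_incr_pm_one that by (simp add: h_def cv_T_Suc)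
      then show ?thesis
        using M.fair_signs_srw[OF srw, unfolded fair_signs_def, rule_format, of m h] by (simp add: A_def)
    qed
    have prob_B: "coin.prob B = 1 / 2"
    proof -
      have "w 0 = 1 \<or> w 0 = -1" using w Suc by auto
      then have "B = {True} \<or> B = {False}" by (auto simp: B_def bool_sign_def)
      then have "card B = 1" by auto
      then show ?thesis by (simp add: coin_def measure_pmf_of_set)
    qed
    have "A \<in> sets M"
    proof -
      have "A = {x\<in>space M. prefix_fun m (\<lambda>i. Sbar x (Suc i) - Sbar x i) \<in> {u. \<forall>k<m. u k = h k}}"
        by (auto simp: A_def prefix_fun_def)
      also have "\<dots> \<in> sets M"
        by (rule event_prefix_fun) (use srw in \<open>simp add: srw_def\<close>)
      finally show ?thesis .
    qed
    moreover have "B \<in> sets coin" by (simp add: coin_def)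
    ultimately have "emeasure (M \<Otimes>\<^sub>M coin) (A \<times> B) = emeasure M A * emeasure coin B"
      by (rule coin.emeasure_pair_measure_Times)
    then have "prob (A \<times> B) = M.prob A * coin.prob B"
      by (simp add: measure_def enn2real_mult)
    then show ?thesis unfolding event prob_A prob_B by (simp add: Suc)
  qed
qed

lemma srw_cv_lift:
  assumes "srw M Sbar"
  shows "srw (M \<Otimes>\<^sub>M coin) (cv_lift Sbar)"
proof -
  interpret M: prob_space M using assms unfolding srw_def by auto
  interpret pair_prob_space M coin
    by (simp add: pair_prob_space_def pair_sigma_finite_def prob_space_coin M.prob_space_axioms
        prob_space_imp_sigma_finite)
  show ?thesis
    using simple_path_cv_lift[OF assms] measurable_cv_lift_step[OF assms] fair_signs_cv_lift[OF assms]
    by (intro srwI) (auto simp: simple_path_def)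
qed

lemma indep_first_step_cv_lift:
  assumes "srw M Sbar"
  shows "prob_space.indep_set (M \<Otimes>\<^sub>M coin) (gen_sigma (space (M \<Otimes>\<^sub>M coin)) (\<lambda>_ \<omega>. cv_lift Sbar \<omega> 1) {()})
           (gen_sigma (space (M \<Otimes>\<^sub>M coin)) (\<lambda>j \<omega>. Sbar (fst \<omega>) j) UNIV)"
  using srw_indep_first_step_cv_T[OF srw_cv_lift[OF assms]]
    gen_sigma_cong[of UNIV "space (M \<Otimes>\<^sub>M coin)" "\<lambda>j \<omega>. cv_T (cv_lift Sbar \<omega>) j"]
    cv_T_cv_lift[OF assms] by simp

lemma AE_cv_lift_unique:
  assumes "srw M Sbar" "srw (M \<Otimes>\<^sub>M coin) S'" "AE \<omega> in M \<Otimes>\<^sub>M coin. cv_T (S' \<omega>) = Sbar (fst \<omega>)"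
  shows "AE \<omega> in M \<Otimes>\<^sub>M coin. S' \<omega> = cv_lift Sbar \<omega> \<or> S' \<omega> = (\<lambda>n. - cv_lift Sbar \<omega> n)"
proof (rule AE_cv_T_eq_cases[OF srw_cv_lift[OF assms(1)] assms(2)])
  show "AE \<omega> in M \<Otimes>\<^sub>M coin. cv_T (S' \<omega>) = cv_T (cv_lift Sbar \<omega>)"
    using assms(3) by (rule AE_mp) (simp add: AE_I2 cv_T_cv_lift[OF assms(1)])
qed

theorem corollary2:
  shows
  "(\<forall>(M::'a measure) S. srw M S \<longrightarrow>
      (\<forall>n. sigma_sets (space M)
              (gen_sigma (space M) (\<lambda>j \<omega>. cv_T (S \<omega>) j) {..n}
               \<union> gen_sigma (space M) (\<lambda>_ \<omega>. S \<omega> 1) {()})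
           = gen_sigma (space M) (\<lambda>j \<omega>. S \<omega> j) {..Suc n})
    \<and> prob_space.indep_set M (gen_sigma (space M) (\<lambda>_ \<omega>. S \<omega> 1) {()})
                             (gen_sigma (space M) (\<lambda>j \<omega>. cv_T (S \<omega>) j) UNIV))
   \<and>
   (\<forall>(M::'a measure) Sbar. srw M Sbar \<longrightarrow>
      (\<exists>(M'::('a \<times> bool) measure) \<pi> S.
          \<pi> \<in> measurable M' M \<and> distr M' M \<pi> = M \<and>
          srw M' S \<and>
          (\<forall>\<omega>\<in>space M'. cv_T (S \<omega>) = Sbar (\<pi> \<omega>)) \<and>
          (\<forall>\<omega>\<in>space M'. \<forall>n. \<bar>run_max_gap (Sbar (\<pi> \<omega>)) n - \<bar>S \<omega> n\<bar>\<bar> \<le> 2) \<and>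
          srw M' (\<lambda>\<omega> n. - S \<omega> n) \<and>
          (\<forall>\<omega>\<in>space M'. cv_T (\<lambda>n. - S \<omega> n) = Sbar (\<pi> \<omega>)) \<and>
          (\<forall>S'. srw M' S' \<and> (AE \<omega> in M'. cv_T (S' \<omega>) = Sbar (\<pi> \<omega>)) \<longrightarrow>
               (AE \<omega> in M'. S' \<omega> = S \<omega> \<or> S' \<omega> = (\<lambda>n. - S \<omega> n))) \<and>
          (\<exists>F. \<forall>\<omega>\<in>space M'. S \<omega> = F (Sbar (\<pi> \<omega>)) (S \<omega> 1)) \<and>
          prob_space.indep_set M' (gen_sigma (space M') (\<lambda>_ \<omega>. S \<omega> 1) {()})
              (gen_sigma (space M') (\<lambda>j \<omega>. Sbar (\<pi> \<omega>) j) UNIV)))"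
proof (intro conjI allI impI, goal_cases)
  case (1 M S n)
  then show ?case by (rule srw_sigma_cv_T_first_step)
next
  case (2 M S)
  then show ?case by (rule srw_indep_first_step_cv_T)
next
  case (3 M Sbar)
  have lift: "cv_T (cv_lift Sbar \<omega>) = Sbar (fst \<omega>)" if "\<omega> \<in> space (M \<Otimes>\<^sub>M coin)" for \<omega>
    by (rule cv_T_cv_lift[OF 3 that])
  have "distr (M \<Otimes>\<^sub>M coin) M fst = M"
    by (rule prob_space.distr_pair_fst[OF prob_space_coin])
  moreover have "\<bar>run_max_gap (Sbar (fst \<omega>)) n - \<bar>cv_lift Sbar \<omega> n\<bar>\<bar> \<le> 2"
    if "\<omega> \<in> space (M \<Otimes>\<^sub>M coin)" for \<omega> n
    using run_max_gap_cv_T[OF simple_path_cv_lift[OF 3 that], of n] lift[OF that] by simp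
  moreover have "cv_lift Sbar \<omega> = cv_inv (Sbar (fst \<omega>)) (cv_lift Sbar \<omega> 1)" for \<omega>
    by (simp add: cv_lift_def)
  ultimately show ?case
    using srw_cv_lift[OF 3] srw_uminus[OF srw_cv_lift[OF 3]] lift cv_T_uminus
      AE_cv_lift_unique[OF 3] indep_first_step_cv_lift[OF 3]
    by (intro exI[of _ "M \<Otimes>\<^sub>M coin"] exI[of _ fst] exI[of _ "cv_lift Sbar"] exI[of _ cv_inv] conjI)
      (simp_all add: measurable_fst)
qed

end
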